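(* Let $T$ be a subcubic tree of dissociation number $\psi$. Then $\Phi(T)\le 1.466^{\psi+2}$.
   Context: All graphs are finite, simple and undirected. A subcubic tree is a tree of maximum degree at most $3$. A dissociation set in a graph $G$ is a vertex subset $F$ such that the induced subgraph $G[F]$ has maximum degree at most $1$; a maximum dissociation set is one of maximum cardinality, and the dissociation number $\psi(G)$ is that cardinality. $\Phi(G)$ denotes the number of maximum dissociation sets of $G$. *)

theory Defs
  imports Complex_Main
begin

definition simple_graph :: "'a set \<Rightarrow> ('a \<Rightarrow> 'a \<Rightarrow> bool) \<Rightarrow> bool" where
  "simple_graph V E \<longleftrightarrow> finite V \<and> (\<forall>u v. E u v \<longrightarrow> u \<in> V \<and> v \<in> V)
     \<and> (\<forall>u v. E u v \<longrightarrow> E v u) \<and> (\<forall>v. \<not> E v v)"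

definition neighbours :: "('a \<Rightarrow> 'a \<Rightarrow> bool) \<Rightarrow> 'a \<Rightarrow> 'a set" where
  "neighbours E v = {u. E v u}"

definition degree :: "('a \<Rightarrow> 'a \<Rightarrow> bool) \<Rightarrow> 'a \<Rightarrow> nat" where
  "degree E v = card (neighbours E v)"

definition connected_graph :: "'a set \<Rightarrow> ('a \<Rightarrow> 'a \<Rightarrow> bool) \<Rightarrow> bool" where
  "connected_graph V E \<longleftrightarrow> V \<noteq> {} \<and> (\<forall>u\<in>V. \<forall>v\<in>V. E\<^sup>*\<^sup>* u v)"

definition is_cycle :: "('a \<Rightarrow> 'a \<Rightarrow> bool) \<Rightarrow> 'a list \<Rightarrow> bool" where
  "is_cycle E cs \<longleftrightarrow> length cs \<ge> 3 \<and> distinct cs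
     \<and> (\<forall>i. Suc i < length cs \<longrightarrow> E (cs ! i) (cs ! Suc i))
     \<and> E (last cs) (hd cs)"

definition acyclic_graph :: "('a \<Rightarrow> 'a \<Rightarrow> bool) \<Rightarrow> bool" where
  "acyclic_graph E \<longleftrightarrow> \<not> (\<exists>cs. is_cycle E cs)"

definition is_tree :: "'a set \<Rightarrow> ('a \<Rightarrow> 'a \<Rightarrow> bool) \<Rightarrow> bool" where
  "is_tree V E \<longleftrightarrow> simple_graph V E \<and> connected_graph V E \<and> acyclic_graph E"

definition subcubic_tree :: "'a set \<Rightarrow> ('a \<Rightarrow> 'a \<Rightarrow> bool) \<Rightarrow> bool" where
  "subcubic_tree V E \<longleftrightarrow> is_tree V E \<and> (\<forall>v\<in>V. degree E v \<le> 3)"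

definition dissociation_set :: "'a set \<Rightarrow> ('a \<Rightarrow> 'a \<Rightarrow> bool) \<Rightarrow> 'a set \<Rightarrow> bool" where
  "dissociation_set V E F \<longleftrightarrow> F \<subseteq> V \<and> (\<forall>v\<in>F. card (neighbours E v \<inter> F) \<le> 1)"

definition dissociation_number :: "'a set \<Rightarrow> ('a \<Rightarrow> 'a \<Rightarrow> bool) \<Rightarrow> nat" where
  "dissociation_number V E = Max (card ` {F. dissociation_set V E F})"

definition max_dissociation_set :: "'a set \<Rightarrow> ('a \<Rightarrow> 'a \<Rightarrow> bool) \<Rightarrow> 'a set \<Rightarrow> bool" where
  "max_dissociation_set V E F \<longleftrightarrow> dissociation_set V E F
     \<and> card F = dissociation_number V E"

definition num_max_dissociation_sets :: "'a set \<Rightarrow> ('a \<Rightarrow> 'a \<Rightarrow> bool) \<Rightarrow> nat" where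
  "num_max_dissociation_sets V E = card {F. max_dissociation_set V E F}"

end

theory Submission
  imports Defs "HOL-Library.Transitive_Closure_Table" "HOL-Library.Option_ord"
    "HOL-Analysis.Ordered_Euclidean_Space"
begin

(*
  Root the tree at r and sort its dissociation sets F into three classes: r \<notin> F, r \<in> F isolated
  in F, and r \<in> F with its partner in F.  The profile of a class is the largest size m of a member
  together with the number of members of size m.  Cutting an edge r b splits every dissociation set
  into its traces on the two sides, and the three profiles of the tree are a fixed
  (max,+)-expression in those of the two rooted halves.

  Dividing every count by 1.466^m and recording the size offsets of the last two classes relative to
  the first (the shape), this expression becomes, for fixed shapes, a bilinear map with nonnegative
  coefficients on the weight vectors.  A finite certificate lists, for every bound k \<le> 2 on the root
  degree and every shape, points whose convex hull dominates the weight vectors of all rooted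
  subcubic trees of that kind.  Bilinearity and monotonicity reduce the induction step to the
  finitely many pairs of certificate points, which are checked by evaluation.  Cutting the tree at
  an edge at its root finally bounds the weight \<Phi> / 1.466^\<psi> of all dissociation sets by 1.466^2.
*)

section \<open>Profiles of set families\<close>

type_synonym profile = "nat \<times> nat"

definition profile :: "'a set set \<Rightarrow> profile" where
  "profile D = (if D = {} then (0, 0)
     else (Max (card ` D), card {F \<in> D. card F = Max (card ` D)}))"

text \<open>A zero count marks the empty family, which is neutral for \<open>\<oplus>\<close> and absorbing for \<open>\<otimes>\<close>.\<close>

definition profile_plus :: "profile \<Rightarrow> profile \<Rightarrow> profile" (infixl "\<oplus>" 65) where
  "a \<oplus> b = (if snd a = 0 then b else if snd b = 0 then a
     else if fst a < fst b then b else if fst b < fst a then a else (fst a, snd a + snd b))"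

definition profile_times :: "profile \<Rightarrow> profile \<Rightarrow> profile" (infixl "\<otimes>" 70) where
  "a \<otimes> b = (if snd a = 0 \<or> snd b = 0 then (0, 0) else (fst a + fst b, snd a * snd b))"

lemma profile_empty [simp]: "profile {} = (0, 0)"
  by (simp add: profile_def)

lemma profile_eqI:
  assumes "finite D" "X \<in> D" "card X = m" "\<And>Y. Y \<in> D \<Longrightarrow> card Y \<le> m"
  shows "profile D = (m, card {Y \<in> D. card Y = m})"
proof -
  have "Max (card ` D) = m"
    using assms by (intro Max_eqI) auto
  then show ?thesis
    using assms(2) by (auto simp: profile_def)
qed

lemma card_le_profile: "finite D \<Longrightarrow> Y \<in> D \<Longrightarrow> card Y \<le> fst (profile D)"
  by (auto simp: profile_def)

lemma profile_attained:
  assumes "finite D" "D \<noteq> {}"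
  shows "\<exists>X \<in> D. card X = fst (profile D)"
proof -
  have "Max (card ` D) \<in> card ` D"
    using assms by simp
  then show ?thesis
    using assms(2) by (auto simp: profile_def)
qed

lemma profile_count: "D \<noteq> {} \<Longrightarrow> snd (profile D) = card {Y \<in> D. card Y = fst (profile D)}"
  by (simp add: profile_def)

lemma profile_count_eq_0_iff:
  assumes "finite D"
  shows "snd (profile D) = 0 \<longleftrightarrow> D = {}"
proof (cases "D = {}")
  case False
  then obtain X where "X \<in> D" "card X = fst (profile D)"
    using assms profile_attained by blast
  then show ?thesis
    using assms False by (auto simp: profile_count)
qed simp

lemma profile_Un_dominated:
  assumes "finite A" "finite B" "B \<noteq> {}" "\<And>X. X \<in> A \<Longrightarrow> card X < fst (profile B)"
  shows "profile (A \<union> B) = profile B"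
proof -
  obtain Z where Z: "Z \<in> B" "card Z = fst (profile B)"
    using assms(2,3) profile_attained by blast
  have "profile (A \<union> B) = (fst (profile B), card {Y \<in> A \<union> B. card Y = fst (profile B)})"
    using assms(1,2) Z by (intro profile_eqI) (auto dest: assms(4) card_le_profile[OF assms(2)])
  also have "{Y \<in> A \<union> B. card Y = fst (profile B)} = {Y \<in> B. card Y = fst (profile B)}"
    by (auto dest: assms(4))
  finally show ?thesis
    using profile_count[OF assms(3)] by (simp add: prod_eq_iff)
qed

lemma profile_Un_disjoint:
  assumes fin: "finite A" "finite B" and disj: "A \<inter> B = {}"
  shows "profile (A \<union> B) = profile A \<oplus> profile B"
proof (cases "A = {} \<or> B = {}")
  case True
  then show ?thesis
    using fin profile_count_eq_0_iff[of A] by (auto simp: profile_plus_def)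
next
  case False
  define a b where "a = profile A" and "b = profile B"
  have le: "\<And>Y. Y \<in> A \<Longrightarrow> card Y \<le> fst a" "\<And>Y. Y \<in> B \<Longrightarrow> card Y \<le> fst b"
    using fin card_le_profile unfolding a_def b_def by blast+
  have pos: "snd a \<noteq> 0" "snd b \<noteq> 0"
    using fin False profile_count_eq_0_iff unfolding a_def b_def by auto
  consider "fst a < fst b" | "fst b < fst a" | "fst a = fst b"
    by linarith
  then show ?thesis
  proof cases
    case 1
    then have "profile (A \<union> B) = b"
      using fin False le(1) unfolding b_def by (intro profile_Un_dominated) fastforce+
    with 1 pos show ?thesis
      by (simp add: profile_plus_def flip: a_def b_def)
  next
    case 2
    then have "profile (B \<union> A) = a"
      using fin False le(2) unfolding a_def by (intro profile_Un_dominated) fastforce+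
    with 2 pos show ?thesis
      by (simp add: profile_plus_def Un_commute flip: a_def b_def)
  next
    case 3
    obtain X where X: "X \<in> A" "card X = fst a"
      using fin False profile_attained unfolding a_def by blast
    have "profile (A \<union> B) = (fst a, card {Y \<in> A \<union> B. card Y = fst a})"
      using fin X 3 by (intro profile_eqI) (auto dest: le)
    also have "card {Y \<in> A \<union> B. card Y = fst a}
        = card {Y \<in> A. card Y = fst a} + card {Y \<in> B. card Y = fst b}"
      using fin disj 3 by (subst card_Un_disjoint[symmetric]) (auto intro: arg_cong[where f = card])
    finally have
      "profile (A \<union> B) = (fst a, card {Y \<in> A. card Y = fst a} + card {Y \<in> B. card Y = fst b})" .
    moreover have "snd a = card {Y \<in> A. card Y = fst a}" "snd b = card {Y \<in> B. card Y = fst b}"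
      using False profile_count unfolding a_def b_def by auto
    ultimately show ?thesis
      using 3 pos by (simp add: profile_plus_def prod_eq_iff flip: a_def b_def)
  qed
qed

definition joins :: "'a set set \<Rightarrow> 'a set set \<Rightarrow> 'a set set" where
  "joins A B = (\<lambda>(X, Y). X \<union> Y) ` (A \<times> B)"

lemma mem_joins_iff:
  assumes "A \<subseteq> Pow U" "B \<subseteq> Pow W" "U \<inter> W = {}"
  shows "F \<in> joins A B \<longleftrightarrow> F \<subseteq> U \<union> W \<and> F \<inter> U \<in> A \<and> F \<inter> W \<in> B"
proof
  assume "F \<in> joins A B"
  then obtain X Y where "X \<in> A" "Y \<in> B" "F = X \<union> Y"
    by (auto simp: joins_def)
  moreover from this have "F \<inter> U = X" "F \<inter> W = Y"
    using assms by blast+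
  ultimately show "F \<subseteq> U \<union> W \<and> F \<inter> U \<in> A \<and> F \<inter> W \<in> B"
    using assms by auto
next
  assume "F \<subseteq> U \<union> W \<and> F \<inter> U \<in> A \<and> F \<inter> W \<in> B"
  moreover have "F = F \<inter> U \<union> F \<inter> W" if "F \<subseteq> U \<union> W"
    using that by auto
  ultimately show "F \<in> joins A B"
    unfolding joins_def by (intro image_eqI[where x = "(F \<inter> U, F \<inter> W)"]) auto
qed

lemma inj_on_joins:
  assumes "A \<subseteq> Pow U" "B \<subseteq> Pow W" "U \<inter> W = {}"
  shows "inj_on (\<lambda>(X, Y). X \<union> Y) (A \<times> B)"
proof (rule inj_onI, clarsimp)
  fix X Y X' Y' assume mem: "X \<in> A" "Y \<in> B" "X' \<in> A" "Y' \<in> B" and eq: "X \<union> Y = X' \<union> Y'"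
  have "X \<subseteq> U" "X' \<subseteq> U" "Y \<subseteq> W" "Y' \<subseteq> W"
    using mem assms(1,2) by auto
  then have "X = (X \<union> Y) \<inter> U" "X' = (X' \<union> Y') \<inter> U" "Y = (X \<union> Y) \<inter> W" "Y' = (X' \<union> Y') \<inter> W"
    using assms(3) by auto
  then show "X = X' \<and> Y = Y'"
    unfolding eq by simp
qed

lemma card_joins:
  assumes "A \<subseteq> Pow U" "B \<subseteq> Pow W" "U \<inter> W = {}"
  shows "card (joins A B) = card A * card B"
  unfolding joins_def by (simp add: card_image[OF inj_on_joins[OF assms]] card_cartesian_product)

lemma profile_joins:
  assumes A: "A \<subseteq> Pow U" and B: "B \<subseteq> Pow W"
    and fin: "finite U" "finite W" and disj: "U \<inter> W = {}"
  shows "profile (joins A B) = profile A \<otimes> profile B"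
proof -
  have finAB: "finite A" "finite B"
    using finite_subset[OF A] finite_subset[OF B] fin by simp_all
  show ?thesis
  proof (cases "A = {} \<or> B = {}")
    case True
    then have "joins A B = {}" "snd (profile A) = 0 \<or> snd (profile B) = 0"
      by (auto simp: joins_def)
    then show ?thesis
      by (simp add: profile_times_def)
  next
    case False
    define a b where "a = profile A" and "b = profile B"
    obtain X Z where X: "X \<in> A" "card X = fst a" and Z: "Z \<in> B" "card Z = fst b"
      using finAB False profile_attained unfolding a_def b_def by meson
    have le: "\<And>Y. Y \<in> A \<Longrightarrow> card Y \<le> fst a" "\<And>Y. Y \<in> B \<Longrightarrow> card Y \<le> fst b"
      using finAB card_le_profile unfolding a_def b_def by blast+
    have pos: "snd a \<noteq> 0" "snd b \<noteq> 0"
      using finAB False profile_count_eq_0_iff unfolding a_def b_def by auto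
    have count: "snd a = card {Y \<in> A. card Y = fst a}" "snd b = card {Y \<in> B. card Y = fst b}"
      using False profile_count unfolding a_def b_def by auto
    have card_Un: "card (Y \<union> Y') = card Y + card Y'" if "Y \<in> A" "Y' \<in> B" for Y Y'
    proof -
      have "Y \<subseteq> U" "Y' \<subseteq> W"
        using that A B by auto
      then show ?thesis
        using finite_subset fin disj by (intro card_Un_disjoint) blast+
    qed
    have maximal: "{F \<in> joins A B. card F = fst a + fst b}
        = joins {Y \<in> A. card Y = fst a} {Y \<in> B. card Y = fst b}"
    proof (intro equalityI subsetI)
      fix F assume "F \<in> {F \<in> joins A B. card F = fst a + fst b}"
      then obtain Y Y' where Y: "Y \<in> A" "Y' \<in> B" "F = Y \<union> Y'" "card Y + card Y' = fst a + fst b"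
        by (auto simp: joins_def card_Un)
      moreover have "card Y = fst a" "card Y' = fst b"
        using le(1)[OF Y(1)] le(2)[OF Y(2)] Y(4) by linarith+
      ultimately show "F \<in> joins {Y \<in> A. card Y = fst a} {Y \<in> B. card Y = fst b}"
        by (auto simp: joins_def)
    next
      fix F assume "F \<in> joins {Y \<in> A. card Y = fst a} {Y \<in> B. card Y = fst b}"
      then show "F \<in> {F \<in> joins A B. card F = fst a + fst b}"
        by (auto simp: joins_def card_Un)
    qed
    have "profile (joins A B) = (fst a + fst b, card {F \<in> joins A B. card F = fst a + fst b})"
    proof (rule profile_eqI)
      show "X \<union> Z \<in> joins A B" "card (X \<union> Z) = fst a + fst b"
        using X Z by (auto simp: joins_def card_Un)
      show "card F \<le> fst a + fst b" if "F \<in> joins A B" for F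
        using that le by (force simp: joins_def card_Un intro: add_mono)
    qed (simp add: joins_def finAB)
    also have "card {F \<in> joins A B. card F = fst a + fst b}
        = card {Y \<in> A. card Y = fst a} * card {Y \<in> B. card Y = fst b}"
      unfolding maximal by (rule card_joins) (use A B disj in auto)
    finally show ?thesis
      using pos count by (simp add: profile_times_def prod_eq_iff flip: a_def b_def)
  qed
qed

section \<open>Cutting a tree at an edge\<close>

definition diss_sets :: "'a set \<Rightarrow> ('a \<Rightarrow> 'a \<Rightarrow> bool) \<Rightarrow> 'a set set" where
  "diss_sets V E = {F. dissociation_set V E F}"

definition root_excluded :: "'a set \<Rightarrow> ('a \<Rightarrow> 'a \<Rightarrow> bool) \<Rightarrow> 'a \<Rightarrow> 'a set set" where
  "root_excluded V E r = {F \<in> diss_sets V E. r \<notin> F}"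

definition root_isolated :: "'a set \<Rightarrow> ('a \<Rightarrow> 'a \<Rightarrow> bool) \<Rightarrow> 'a \<Rightarrow> 'a set set" where
  "root_isolated V E r = {F \<in> diss_sets V E. r \<in> F \<and> neighbours E r \<inter> F = {}}"

definition root_matched :: "'a set \<Rightarrow> ('a \<Rightarrow> 'a \<Rightarrow> bool) \<Rightarrow> 'a \<Rightarrow> 'a set set" where
  "root_matched V E r = {F \<in> diss_sets V E. r \<in> F \<and> neighbours E r \<inter> F \<noteq> {}}"

type_synonym profiles = "profile \<times> profile \<times> profile"

definition root_profiles :: "'a set \<Rightarrow> ('a \<Rightarrow> 'a \<Rightarrow> bool) \<Rightarrow> 'a \<Rightarrow> profiles" where
  "root_profiles V E r =
     (profile (root_excluded V E r), profile (root_isolated V E r), profile (root_matched V E r))"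

fun total_profile :: "profiles \<Rightarrow> profile" where
  "total_profile (a0, a1, a2) = a0 \<oplus> a1 \<oplus> a2"

text \<open>
  The profiles of a tree cut at its root edge r b: if r \<notin> F the b-side is unconstrained; if r is
  isolated then b \<notin> F; if r is matched, either its partner lies on the r-side and b \<notin> F, or its
  partner is b, and then b is isolated on its own side.
\<close>

fun glue :: "profiles \<Rightarrow> profiles \<Rightarrow> profiles" where
  "glue (a0, a1, a2) (b0, b1, b2) = (a0 \<otimes> (b0 \<oplus> b1 \<oplus> b2), a1 \<otimes> b0, a2 \<otimes> b0 \<oplus> a1 \<otimes> b1)"

lemma diss_sets_subset_Pow: "diss_sets V E \<subseteq> Pow V"
  by (auto simp: diss_sets_def dissociation_set_def)

lemma root_families_subset_Pow:
  "root_excluded V E r \<subseteq> Pow V" "root_isolated V E r \<subseteq> Pow V" "root_matched V E r \<subseteq> Pow V"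
  using diss_sets_subset_Pow by (auto simp: root_excluded_def root_isolated_def root_matched_def)

lemma finite_root_families:
  assumes "finite V"
  shows "finite (root_excluded V E r)" "finite (root_isolated V E r)" "finite (root_matched V E r)"
  using finite_subset[OF root_families_subset_Pow(1)] finite_subset[OF root_families_subset_Pow(2)]
    finite_subset[OF root_families_subset_Pow(3)] assms by simp_all

lemma profile_diss_sets_eq_total:
  assumes "finite V"
  shows "profile (diss_sets V E) = total_profile (root_profiles V E r)"
proof -
  have "diss_sets V E = (root_excluded V E r \<union> root_isolated V E r) \<union> root_matched V E r"
    by (auto simp: root_excluded_def root_isolated_def root_matched_def)
  also have "profile \<dots> = profile (root_excluded V E r) \<oplus> profile (root_isolated V E r)
      \<oplus> profile (root_matched V E r)"
  proof -
    have "root_excluded V E r \<inter> root_isolated V E r = {}"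
      "(root_excluded V E r \<union> root_isolated V E r) \<inter> root_matched V E r = {}"
      by (auto simp: root_excluded_def root_isolated_def root_matched_def)
    with finite_root_families[OF assms] show ?thesis
      by (simp add: profile_Un_disjoint)
  qed
  finally show ?thesis
    by (simp add: root_profiles_def)
qed

definition restrict_graph :: "'a set \<Rightarrow> ('a \<Rightarrow> 'a \<Rightarrow> bool) \<Rightarrow> 'a \<Rightarrow> 'a \<Rightarrow> bool" where
  "restrict_graph U E u v \<longleftrightarrow> E u v \<and> u \<in> U \<and> v \<in> U"

lemma neighbours_restrict_graph: "u \<in> U \<Longrightarrow> neighbours (restrict_graph U E) u = neighbours E u \<inter> U"
  by (auto simp: neighbours_def restrict_graph_def)

lemma neighbours_restrict_graph_subset: "neighbours (restrict_graph U E) u \<subseteq> U"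
  by (auto simp: neighbours_def restrict_graph_def)

lemma finite_neighbours: "simple_graph V E \<Longrightarrow> finite (neighbours E u)"
  by (rule finite_subset[of _ V]) (auto simp: simple_graph_def neighbours_def)

lemma simple_graph_restrict: "simple_graph V E \<Longrightarrow> U \<subseteq> V \<Longrightarrow> simple_graph U (restrict_graph U E)"
  by (auto simp: simple_graph_def restrict_graph_def intro: finite_subset)

lemma acyclic_graph_restrict: "acyclic_graph E \<Longrightarrow> acyclic_graph (restrict_graph U E)"
  by (auto simp: acyclic_graph_def is_cycle_def restrict_graph_def)

lemma degree_restrict_le:
  "simple_graph V E \<Longrightarrow> u \<in> U \<Longrightarrow> degree (restrict_graph U E) u \<le> degree E u"
  unfolding degree_def by (simp add: neighbours_restrict_graph card_mono finite_neighbours)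

locale edge_cut =
  fixes V :: "'a set" and E :: "'a \<Rightarrow> 'a \<Rightarrow> bool" and r b :: 'a and V1 V2 :: "'a set"
  assumes simple: "simple_graph V E"
    and cover: "V1 \<union> V2 = V" and disjoint: "V1 \<inter> V2 = {}"
    and r_in: "r \<in> V1" and b_in: "b \<in> V2" and edge: "E r b"
    and crossing: "\<And>u w. u \<in> V1 \<Longrightarrow> w \<in> V2 \<Longrightarrow> E u w \<Longrightarrow> u = r \<and> w = b"
begin

abbreviation "E1 \<equiv> restrict_graph V1 E"
abbreviation "E2 \<equiv> restrict_graph V2 E"

lemma sym: "E u v \<Longrightarrow> E v u"
  using simple by (simp add: simple_graph_def)

lemma edge_in: "E u v \<Longrightarrow> u \<in> V \<and> v \<in> V"
  using simple by (simp add: simple_graph_def)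

lemma swap: "edge_cut V E b r V2 V1"
proof
  show "E b r"
    using edge by (rule sym)
  show "u = b \<and> w = r" if "u \<in> V2" "w \<in> V1" "E u w" for u w
    using crossing[OF that(2,1) sym[OF that(3)]] by simp
qed (use simple cover disjoint r_in b_in in auto)

lemma neighbours_Int_left:
  assumes "v \<in> V1"
  shows "neighbours E v \<inter> F = neighbours E1 v \<inter> F \<union> (if v = r \<and> b \<in> F then {b} else {})"
proof -
  have "w \<in> V1" if "E v w" "\<not> (v = r \<and> w = b)" for w
    using that crossing[OF assms] edge_in[OF that(1)] cover by blast
  then show ?thesis
    using assms edge r_in by (auto simp: neighbours_def restrict_graph_def)
qed

lemma card_neighbours_Int_left:
  assumes "v \<in> V1"
  shows "card (neighbours E v \<inter> F) = card (neighbours E1 v \<inter> F) + of_bool (v = r \<and> b \<in> F)"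
proof -
  have notin: "b \<notin> neighbours E1 v \<inter> F"
    using neighbours_restrict_graph_subset[of V1 E v] b_in disjoint by auto
  have fin: "finite (neighbours E1 v \<inter> F)"
    using finite_neighbours[OF simple, of v] by (simp add: neighbours_restrict_graph[OF assms])
  show ?thesis
  proof (cases "v = r \<and> b \<in> F")
    case True
    then have "neighbours E v \<inter> F = insert b (neighbours E1 v \<inter> F)"
      using neighbours_Int_left[OF assms] by simp
    then show ?thesis
      using True card_insert_disjoint[OF fin notin] by simp
  next
    case False
    then show ?thesis
      unfolding neighbours_Int_left[OF assms, of F] by (simp only: if_False of_bool_eq(1)) simp
  qed
qed

lemma neighbours_restrict_Int:
  "neighbours E1 v \<inter> (F \<inter> V1) = neighbours E1 v \<inter> F"
  "neighbours E2 v \<inter> (F \<inter> V2) = neighbours E2 v \<inter> F"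
  using neighbours_restrict_graph_subset[of V1 E v] neighbours_restrict_graph_subset[of V2 E v]
  by auto

lemma dissociation_left_iff:
  "(\<forall>v \<in> F \<inter> V1. card (neighbours E v \<inter> F) \<le> 1) \<longleftrightarrow>
     (\<forall>v \<in> F \<inter> V1. card (neighbours E1 v \<inter> F) \<le> 1) \<and> (r \<in> F \<and> b \<in> F \<longrightarrow> neighbours E1 r \<inter> F = {})"
proof -
  have fin: "finite (neighbours E1 r \<inter> F)"
    using finite_neighbours[OF simple, of r] by (simp add: neighbours_restrict_graph[OF r_in])
  have "card (neighbours E v \<inter> F) \<le> 1 \<longleftrightarrow>
      card (neighbours E1 v \<inter> F) \<le> 1 \<and> (v = r \<and> b \<in> F \<longrightarrow> neighbours E1 r \<inter> F = {})"
    if "v \<in> V1" for v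
    using card_neighbours_Int_left[OF that, of F] fin by (cases "v = r \<and> b \<in> F") auto
  then show ?thesis
    using r_in by blast
qed

lemma diss_sets_cut_iff:
  assumes "F \<subseteq> V"
  shows "F \<in> diss_sets V E \<longleftrightarrow> F \<inter> V1 \<in> diss_sets V1 E1 \<and> F \<inter> V2 \<in> diss_sets V2 E2 \<and>
    (r \<in> F \<and> b \<in> F \<longrightarrow> neighbours E1 r \<inter> F = {} \<and> neighbours E2 b \<inter> F = {})"
proof -
  have "F \<in> diss_sets V E \<longleftrightarrow> (\<forall>v \<in> F \<inter> V1. card (neighbours E v \<inter> F) \<le> 1)
      \<and> (\<forall>v \<in> F \<inter> V2. card (neighbours E v \<inter> F) \<le> 1)"
    using assms cover by (auto simp: diss_sets_def dissociation_set_def)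
  moreover have "F \<inter> V1 \<in> diss_sets V1 E1 \<longleftrightarrow> (\<forall>v \<in> F \<inter> V1. card (neighbours E1 v \<inter> F) \<le> 1)"
    "F \<inter> V2 \<in> diss_sets V2 E2 \<longleftrightarrow> (\<forall>v \<in> F \<inter> V2. card (neighbours E2 v \<inter> F) \<le> 1)"
    by (simp_all add: diss_sets_def dissociation_set_def neighbours_restrict_Int)
  ultimately show ?thesis
    unfolding dissociation_left_iff edge_cut.dissociation_left_iff[OF swap] by blast
qed

lemma mem_joins_cut_iff:
  "A \<subseteq> Pow V1 \<Longrightarrow> B \<subseteq> Pow V2 \<Longrightarrow> F \<in> joins A B \<longleftrightarrow> F \<subseteq> V \<and> F \<inter> V1 \<in> A \<and> F \<inter> V2 \<in> B"
  using mem_joins_iff[of A V1 B V2 F] disjoint cover by simp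

lemma root_excluded_cut: "root_excluded V E r = joins (root_excluded V1 E1 r) (diss_sets V2 E2)"
proof (rule set_eqI)
  fix F
  have "F \<in> root_excluded V E r \<longleftrightarrow> F \<subseteq> V \<and> F \<inter> V1 \<in> root_excluded V1 E1 r \<and> F \<inter> V2 \<in> diss_sets V2 E2"
    using diss_sets_cut_iff[of F] r_in root_families_subset_Pow(1)[of V E r]
    by (auto simp: root_excluded_def)
  then show "F \<in> root_excluded V E r \<longleftrightarrow> F \<in> joins (root_excluded V1 E1 r) (diss_sets V2 E2)"
    by (simp add: mem_joins_cut_iff root_families_subset_Pow diss_sets_subset_Pow)
qed

lemma neighbours_root_Int: "neighbours E r \<inter> F = neighbours E1 r \<inter> F \<union> (if b \<in> F then {b} else {})"
  using neighbours_Int_left[OF r_in] by simp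

lemma root_isolated_cut:
  "root_isolated V E r = joins (root_isolated V1 E1 r) (root_excluded V2 E2 b)"
proof (rule set_eqI)
  fix F
  have "F \<in> root_isolated V E r \<longleftrightarrow>
      F \<subseteq> V \<and> F \<inter> V1 \<in> root_isolated V1 E1 r \<and> F \<inter> V2 \<in> root_excluded V2 E2 b"
    using diss_sets_cut_iff[of F] r_in b_in root_families_subset_Pow(2)[of V E r]
    by (auto simp: root_isolated_def root_excluded_def neighbours_root_Int neighbours_restrict_Int)
  then show "F \<in> root_isolated V E r \<longleftrightarrow> F \<in> joins (root_isolated V1 E1 r) (root_excluded V2 E2 b)"
    by (simp add: mem_joins_cut_iff root_families_subset_Pow)
qed

lemma root_matched_cut:
  "root_matched V E r = joins (root_matched V1 E1 r) (root_excluded V2 E2 b)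
     \<union> joins (root_isolated V1 E1 r) (root_isolated V2 E2 b)"
proof (rule set_eqI)
  fix F
  have "F \<in> root_matched V E r \<longleftrightarrow> F \<subseteq> V \<and>
      (F \<inter> V1 \<in> root_matched V1 E1 r \<and> F \<inter> V2 \<in> root_excluded V2 E2 b \<or>
       F \<inter> V1 \<in> root_isolated V1 E1 r \<and> F \<inter> V2 \<in> root_isolated V2 E2 b)"
    using diss_sets_cut_iff[of F] r_in b_in diss_sets_subset_Pow[of V E]
    by (auto simp: root_matched_def root_isolated_def root_excluded_def neighbours_root_Int
        neighbours_restrict_Int)
  then show "F \<in> root_matched V E r \<longleftrightarrow> F \<in> joins (root_matched V1 E1 r) (root_excluded V2 E2 b)
     \<union> joins (root_isolated V1 E1 r) (root_isolated V2 E2 b)"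
    by (auto simp: mem_joins_cut_iff root_families_subset_Pow)
qed

lemma finite_sides: "finite V1" "finite V2"
  using simple cover by (auto simp: simple_graph_def)

lemma root_profiles_glue:
  "root_profiles V E r = glue (root_profiles V1 E1 r) (root_profiles V2 E2 b)"
proof -
  note fin = finite_sides and joins = profile_joins[OF _ _ finite_sides disjoint]
  have "profile (root_excluded V E r) = profile (root_excluded V1 E1 r) \<otimes> profile (diss_sets V2 E2)"
    unfolding root_excluded_cut
    by (rule joins) (simp_all add: root_families_subset_Pow diss_sets_subset_Pow)
  moreover have "profile (root_isolated V E r)
      = profile (root_isolated V1 E1 r) \<otimes> profile (root_excluded V2 E2 b)"
    unfolding root_isolated_cut by (rule joins) (simp_all add: root_families_subset_Pow)
  moreover have "profile (root_matched V E r)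
      = profile (root_matched V1 E1 r) \<otimes> profile (root_excluded V2 E2 b)
        \<oplus> profile (root_isolated V1 E1 r) \<otimes> profile (root_isolated V2 E2 b)"
  proof -
    have "b \<notin> F" if "F \<in> joins (root_matched V1 E1 r) (root_excluded V2 E2 b)" for F
      using that b_in unfolding mem_joins_cut_iff[OF root_families_subset_Pow(3,1)]
      by (auto simp: root_excluded_def)
    moreover have "b \<in> F" if "F \<in> joins (root_isolated V1 E1 r) (root_isolated V2 E2 b)" for F
      using that b_in unfolding mem_joins_cut_iff[OF root_families_subset_Pow(2,2)]
      by (auto simp: root_isolated_def)
    ultimately have "joins (root_matched V1 E1 r) (root_excluded V2 E2 b)
        \<inter> joins (root_isolated V1 E1 r) (root_isolated V2 E2 b) = {}"
      by blast
    moreover have "finite (joins A B)" if "A \<subseteq> Pow V1" "B \<subseteq> Pow V2" for A B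
      using finite_subset[OF that(1)] finite_subset[OF that(2)] fin by (simp add: joins_def)
    ultimately show ?thesis
      unfolding root_matched_cut
      by (simp add: profile_Un_disjoint joins root_families_subset_Pow)
  qed
  ultimately show ?thesis
    using profile_diss_sets_eq_total[OF fin(2), of E2 b] by (simp add: root_profiles_def)
qed

lemma degree_root_left: "degree E r = Suc (degree E1 r)"
  using card_neighbours_Int_left[OF r_in, of UNIV] by (simp add: degree_def)

lemma card_left_less: "card V1 < card V"
proof (rule psubset_card_mono)
  show "finite V"
    using simple by (simp add: simple_graph_def)
  show "V1 \<subset> V"
    using cover disjoint b_in by auto
qed

lemma reachable_left: "E\<^sup>*\<^sup>* r v \<Longrightarrow> v \<in> V1 \<Longrightarrow> E1\<^sup>*\<^sup>* r v"
proof (induction rule: rtranclp_induct)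
  case (step u v)
  show ?case
  proof (cases "u \<in> V1")
    case True
    then have "E1 u v"
      using step by (simp add: restrict_graph_def)
    with True step show ?thesis
      by (meson rtranclp.rtrancl_into_rtrancl)
  next
    case False
    then have "u \<in> V2"
      using edge_in[OF step(2)] cover by blast
    then have "v = r"
      using crossing[OF step(4)] sym[OF step(2)] by blast
    then show ?thesis
      by simp
  qed
qed simp

lemma connected_left:
  assumes "connected_graph V E"
  shows "connected_graph V1 E1"
proof -
  have "symp E1"
    unfolding symp_def restrict_graph_def using sym by blast
  then have sym1: "E1\<^sup>*\<^sup>* u v \<Longrightarrow> E1\<^sup>*\<^sup>* v u" for u v
    by (meson symp_rtranclp sympD)
  have "E1\<^sup>*\<^sup>* u v" if "u \<in> V1" "v \<in> V1" for u v
  proof -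
    have "E\<^sup>*\<^sup>* r u" "E\<^sup>*\<^sup>* r v"
      using assms that r_in cover by (auto simp: connected_graph_def)
    then show ?thesis
      using reachable_left sym1 that by (meson rtranclp_trans)
  qed
  then show ?thesis
    using r_in by (auto simp: connected_graph_def)
qed

lemma subcubic_tree_left:
  assumes "subcubic_tree V E"
  shows "subcubic_tree V1 E1"
  using assms simple_graph_restrict[OF simple] acyclic_graph_restrict connected_left
    degree_restrict_le[OF simple] cover
  unfolding subcubic_tree_def is_tree_def by (meson UnCI le_trans sup_ge1)

end

lemma rtrancl_path_nth:
  "rtrancl_path R x ys z \<Longrightarrow>
    (\<forall>i. Suc i < length (x # ys) \<longrightarrow> R ((x # ys) ! i) ((x # ys) ! Suc i)) \<and> last (x # ys) = z"
  by (induction rule: rtrancl_path.induct) (auto simp: nth_Cons split: nat.split)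

lemma acyclic_no_bypass:
  assumes "simple_graph V E" "acyclic_graph E" "E r b"
  shows "\<not> (\<lambda>u v. E u v \<and> \<not> (u = r \<and> v = b \<or> u = b \<and> v = r))\<^sup>*\<^sup>* b r"
    (is "\<not> ?E'\<^sup>*\<^sup>* b r")
proof
  assume "?E'\<^sup>*\<^sup>* b r"
  then obtain xs where "rtrancl_path ?E' b xs r"
    by (auto simp: rtranclp_eq_rtrancl_path)
  then obtain ys where path: "rtrancl_path ?E' b ys r" and distinct: "distinct (b # ys)"
    by (rule rtrancl_path_distinct)
  have steps: "\<forall>i. Suc i < length (b # ys) \<longrightarrow> ?E' ((b # ys) ! i) ((b # ys) ! Suc i)"
    and last: "last (b # ys) = r"
    using rtrancl_path_nth[OF path] by auto
  have "r \<noteq> b"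
    using assms(1,3) by (auto simp: simple_graph_def)
  have "2 \<le> length ys"
  proof (rule ccontr)
    assume "\<not> 2 \<le> length ys"
    moreover have "ys \<noteq> []"
      using last \<open>r \<noteq> b\<close> by auto
    ultimately have "length ys = 1"
      by (cases ys) (auto simp: Suc_le_eq)
    then obtain y where "ys = [y]"
      by (cases ys) auto
    then show False
      using steps last by (auto dest: spec[of _ 0])
  qed
  then have "is_cycle E (b # ys)"
    using distinct steps last assms(3) by (auto simp: is_cycle_def)
  then show False
    using assms(2) by (auto simp: acyclic_graph_def)
qed

lemma tree_edge_cut:
  assumes tree: "is_tree V E" and edge: "E r b"
  obtains V1 V2 where "edge_cut V E r b V1 V2"
proof -
  have simple: "simple_graph V E" and acyclic: "acyclic_graph E"
    using tree by (auto simp: is_tree_def)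
  define E' where "E' = (\<lambda>u v. E u v \<and> \<not> (u = r \<and> v = b \<or> u = b \<and> v = r))"
  define V2 where "V2 = {v. E'\<^sup>*\<^sup>* b v}"
  have in_V: "E u v \<Longrightarrow> u \<in> V \<and> v \<in> V" for u v
    using simple by (simp add: simple_graph_def)
  have "V2 \<subseteq> V"
  proof
    fix v assume "v \<in> V2"
    then have "E'\<^sup>*\<^sup>* b v"
      by (simp add: V2_def)
    then show "v \<in> V"
      by (induction rule: rtranclp_induct) (use in_V edge in \<open>auto simp: E'_def\<close>)
  qed
  moreover have "r \<notin> V2"
    using acyclic_no_bypass[OF simple acyclic edge] by (simp add: V2_def E'_def)
  moreover have "u = r \<and> w = b" if "u \<in> V - V2" "w \<in> V2" "E u w" for u w
  proof (rule ccontr)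
    assume "\<not> (u = r \<and> w = b)"
    with \<open>r \<notin> V2\<close> that have "E' w u"
      using simple by (auto simp: E'_def simple_graph_def)
    then have "u \<in> V2"
      using that(2) by (auto simp: V2_def intro: rtranclp.rtrancl_into_rtrancl)
    with that(1) show False
      by simp
  qed
  ultimately have "edge_cut V E r b (V - V2) V2"
    using simple edge in_V[OF edge] by unfold_locales (auto simp: V2_def)
  then show ?thesis
    by (rule that)
qed

definition leaf_profiles :: profiles where
  "leaf_profiles = ((0, 1), (1, 1), (0, 0))"

lemma profile_singleton: "profile {X} = (card X, 1)"
proof -
  have "{Y \<in> {X}. card Y = card X} = {X}"
    by auto
  then show ?thesis
    by (simp add: profile_def)
qed

lemma root_profiles_isolated_vertex:
  assumes "simple_graph V E" "connected_graph V E" "r \<in> V" "degree E r = 0"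
  shows "root_profiles V E r = leaf_profiles"
proof -
  have no_edge: "\<not> E r v" for v
    using assms(4) finite_neighbours[OF assms(1), of r] by (auto simp: degree_def neighbours_def)
  have "V = {r}"
  proof (intro equalityI subsetI)
    fix v assume "v \<in> V"
    then have "E\<^sup>*\<^sup>* r v"
      using assms(2,3) by (simp add: connected_graph_def)
    then show "v \<in> {r}"
      by (cases rule: converse_rtranclpE) (auto simp: no_edge)
  qed (use assms(3) in simp)
  moreover have "neighbours E r = {}"
    using no_edge by (simp add: neighbours_def)
  ultimately have
    "root_excluded V E r = {{}}" "root_isolated V E r = {{r}}" "root_matched V E r = {}"
    by (auto simp: root_excluded_def root_isolated_def root_matched_def diss_sets_def
        dissociation_set_def)
  then show ?thesis
    by (simp add: root_profiles_def leaf_profiles_def profile_singleton)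
qed

lemma subcubic_tree_cut:
  assumes "subcubic_tree V E" "E r b"
  obtains V1 V2 where "edge_cut V E r b V1 V2"
    "subcubic_tree V1 (restrict_graph V1 E)" "subcubic_tree V2 (restrict_graph V2 E)"
    "degree E r = Suc (degree (restrict_graph V1 E) r)"
    "degree E b = Suc (degree (restrict_graph V2 E) b)"
proof -
  have "is_tree V E"
    using assms(1) by (simp add: subcubic_tree_def)
  then obtain V1 V2 where cut: "edge_cut V E r b V1 V2"
    using assms(2) by (rule tree_edge_cut)
  interpret edge_cut V E r b V1 V2
    by (rule cut)
  show ?thesis
    using that[OF cut] assms(1) subcubic_tree_left degree_root_left
      edge_cut.subcubic_tree_left[OF swap] edge_cut.degree_root_left[OF swap]
    by blast
qed

section \<open>Normalised weights\<close>

definition growth_rate :: real where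
  "growth_rate = 1.466"

lemma growth_rate_pos: "0 < growth_rate"
  by (simp add: growth_rate_def)

definition weight :: "profile \<Rightarrow> real" where
  "weight a = real (snd a) / growth_rate ^ fst a"

definition level :: "nat \<Rightarrow> profile \<Rightarrow> int option" where
  "level m a = (if snd a = 0 then None else Some (int (fst a) - int m))"

fun add_level :: "int option \<Rightarrow> int option \<Rightarrow> int option" where
  "add_level (Some k) (Some l) = Some (k + l)"
| "add_level _ _ = None"

lemma weight_nonneg: "0 \<le> weight a"
  using growth_rate_pos by (simp add: weight_def)

lemma weight_times: "weight (a \<otimes> b) = weight a * weight b"
  by (simp add: weight_def profile_times_def power_add)

lemma level_times: "level (m + n) (a \<otimes> b) = add_level (level m a) (level n b)"
  by (simp add: level_def profile_times_def)

lemma level_plus: "level m (a \<oplus> b) = sup (level m a) (level m b)"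
  by (auto simp: level_def profile_plus_def sup_max[where 'a = int] max_def)

lemma weight_plus:
  "weight (a \<oplus> b) = of_bool (level m a = sup (level m a) (level m b)) * weight a
     + of_bool (level m b = sup (level m a) (level m b)) * weight b"
  by (auto simp: level_def profile_plus_def sup_max[where 'a = int] max_def weight_def
      add_divide_distrib)

lemma level_shift: "level (m + d) a = map_option (\<lambda>l. l - int d) (level m a)"
  by (simp add: level_def)

lemma level_self: "0 < snd a \<Longrightarrow> level (fst a) a = Some 0"
  by (simp add: level_def)

lemma map_option_diff_sup:
  "map_option (\<lambda>l. l - d) (sup x y)
     = sup (map_option (\<lambda>l. l - d) x) (map_option (\<lambda>l. l - (d::int)) y)"
  by (cases x; cases y) (simp_all add: sup_max[where 'a = int])

type_synonym shape = "int option \<times> int option"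

fun shape :: "profiles \<Rightarrow> shape" where
  "shape (a0, a1, a2) = (level (fst a0) a1, level (fst a0) a2)"

fun weights :: "profiles \<Rightarrow> real \<times> real \<times> real" where
  "weights (a0, a1, a2) = (weight a0, weight a1, weight a2)"

text \<open>Both conditions hold for all root profiles, as \<open>{}\<close> and \<open>{r}\<close> are dissociation sets.\<close>

fun proper :: "profiles \<Rightarrow> bool" where
  "proper (a0, a1, a2) \<longleftrightarrow> 0 < snd a0 \<and> 0 < snd a1"

fun top_level :: "shape \<Rightarrow> int" where
  "top_level (k1, k2) = the (sup (Some 0) (sup k1 k2))"

text \<open>
  The maps below are polymorphic so that the certificate checks can evaluate them on integer points.
\<close>

fun total_weight :: "shape \<Rightarrow> 'a \<times> 'a \<times> 'a \<Rightarrow> 'a::comm_semiring_1" where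
  "total_weight (k1, k2) (x0, x1, x2) = (let m = top_level (k1, k2) in
     of_bool (m = 0) * x0 + of_bool (k1 = Some m) * x1 + of_bool (k2 = Some m) * x2)"

fun glue_shape :: "shape \<Rightarrow> shape \<Rightarrow> shape" where
  "glue_shape (k1, k2) q = (let m = top_level q in
     (map_option (\<lambda>l. l - m) k1, map_option (\<lambda>l. l - m) (sup k2 (add_level k1 (fst q)))))"

fun glue_weights :: "shape \<Rightarrow> shape \<Rightarrow> 'a \<times> 'a \<times> 'a \<Rightarrow> 'a \<times> 'a \<times> 'a \<Rightarrow> 'a::comm_semiring_1 \<times> 'a \<times> 'a"
  where
  "glue_weights (k1, k2) q (x0, x1, x2) (y0, y1, y2) = (let t = add_level k1 (fst q) in
     (x0 * total_weight q (y0, y1, y2), x1 * y0,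
      of_bool (k2 = sup k2 t) * x2 * y0 + of_bool (t = sup k2 t) * x1 * y1))"

lemma top_level_nonneg: "0 \<le> top_level (k1, k2)"
  by (cases k1; cases k2) (simp_all add: sup_max[where 'a = int])

lemma level_total:
  assumes "0 < snd a0"
  shows "level (fst a0) (a0 \<oplus> a1 \<oplus> a2) = Some (top_level (level (fst a0) a1, level (fst a0) a2))"
  using assms by (cases "level (fst a0) a1"; cases "level (fst a0) a2")
    (simp_all add: level_plus level_self sup_max[where 'a = int])

lemma profile_total:
  assumes "0 < snd a0"
  shows "fst (a0 \<oplus> a1 \<oplus> a2) = fst a0 + nat (top_level (level (fst a0) a1, level (fst a0) a2))"
    and "0 < snd (a0 \<oplus> a1 \<oplus> a2)"
proof -
  let ?m = "top_level (level (fst a0) a1, level (fst a0) a2)"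
  have "snd (a0 \<oplus> a1 \<oplus> a2) \<noteq> 0 \<and> int (fst (a0 \<oplus> a1 \<oplus> a2)) - int (fst a0) = ?m"
    using level_total[OF assms, of a1 a2] by (simp add: level_def split: if_splits)
  with top_level_nonneg[of "level (fst a0) a1" "level (fst a0) a2"]
  show "fst (a0 \<oplus> a1 \<oplus> a2) = fst a0 + nat ?m" "0 < snd (a0 \<oplus> a1 \<oplus> a2)"
    by (simp_all del: top_level.simps) arith
qed

lemma weight_total:
  assumes "0 < snd a0"
  shows "weight (a0 \<oplus> a1 \<oplus> a2)
    = total_weight (level (fst a0) a1, level (fst a0) a2) (weight a0, weight a1, weight a2)"
proof -
  have zero: "weight a = 0" if "level m a = None" for m a
    using that by (simp add: level_def weight_def split: if_splits)
  show ?thesis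
    using assms zero[of "fst a0" a1] zero[of "fst a0" a2]
    by (cases "level (fst a0) a1"; cases "level (fst a0) a2")
      (auto simp: weight_plus[where m = "fst a0"] level_plus level_self sup_max[where 'a = int]
        max_def Let_def)
qed

lemma weight_total_profile:
  "proper S \<Longrightarrow> weight (total_profile S) = total_weight (shape S) (weights S)"
  by (cases S) (simp add: weight_total)

lemma proper_glue: "proper S \<Longrightarrow> proper T \<Longrightarrow> proper (glue S T)"
  by (cases S; cases T) (auto simp: profile_times_def profile_total(2))

lemma shape_weights_glue:
  assumes "proper S" "proper T"
  shows "shape (glue S T) = glue_shape (shape S) (shape T)"
    and "weights (glue S T) = glue_weights (shape S) (shape T) (weights S) (weights T)"
proof -
  obtain a0 a1 a2 b0 b1 b2 where S: "S = (a0, a1, a2)" and T: "T = (b0, b1, b2)"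
    by (cases S; cases T) auto
  have pos: "0 < snd a0" "0 < snd a1" "0 < snd b0"
    using assms by (simp_all add: S T)
  define k1 k2 m where "k1 = level (fst b0) b1" and "k2 = level (fst b0) b2"
    and "m = top_level (k1, k2)"
  define L where "L = fst a0 + fst b0"
  have fst0: "fst (a0 \<otimes> (b0 \<oplus> b1 \<oplus> b2)) = L + nat m"
    using pos profile_total[OF pos(3), of b1 b2]
    by (simp add: profile_times_def L_def m_def k1_def k2_def)
  have b0: "level (fst b0) b0 = Some 0"
    using pos(3) by (rule level_self)
  have l1: "level L (a1 \<otimes> b0) = level (fst a0) a1"
    using level_times[of "fst a0" "fst b0" a1 b0] b0 pos(2) by (simp add: L_def level_def)
  have l20: "level L (a2 \<otimes> b0) = level (fst a0) a2"
    using level_times[of "fst a0" "fst b0" a2 b0] b0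
    by (cases "level (fst a0) a2") (simp_all add: L_def)
  have l11: "level L (a1 \<otimes> b1) = add_level (level (fst a0) a1) k1"
    using level_times[of "fst a0" "fst b0" a1 b1] by (simp add: L_def k1_def)
  show "shape (glue S T) = glue_shape (shape S) (shape T)"
    using top_level_nonneg[of k1 k2]
    by (simp add: S T fst0 level_shift l1 l20 l11 level_plus map_option_diff_sup m_def k1_def k2_def
        Let_def del: top_level.simps)
  have w0: "weight (b0 \<oplus> b1 \<oplus> b2) = total_weight (k1, k2) (weights T)"
    unfolding weight_total[OF pos(3)] T k1_def k2_def weights.simps ..
  define t where "t = add_level (level (fst a0) a1) k1"
  have w2: "weight (a2 \<otimes> b0 \<oplus> a1 \<otimes> b1)
      = of_bool (level (fst a0) a2 = sup (level (fst a0) a2) t) * weight a2 * weight b0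
        + of_bool (t = sup (level (fst a0) a2) t) * weight a1 * weight b1"
    using weight_plus[where m = L, of "a2 \<otimes> b0" "a1 \<otimes> b1"] by (simp add: l20 l11 weight_times t_def)
  show "weights (glue S T) = glue_weights (shape S) (shape T) (weights S) (weights T)"
    by (simp add: S T w0 w2 weight_times Let_def t_def k1_def k2_def del: total_weight.simps)
qed

section \<open>Lower convex hulls\<close>

definition lower_hull :: "'a::ordered_real_vector set \<Rightarrow> 'a set" where
  "lower_hull S = {x. \<exists>y \<in> convex hull S. x \<le> y}"

lemma lower_hull_downward: "y \<in> lower_hull S \<Longrightarrow> x \<le> y \<Longrightarrow> x \<in> lower_hull S"
  by (auto simp: lower_hull_def intro: order_trans)

lemma convex_lower_hull: "convex (lower_hull S)"
proof (rule convexI)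
  fix x x' :: 'a and u v :: real
  assume "x \<in> lower_hull S" "x' \<in> lower_hull S" and uv: "0 \<le> u" "0 \<le> v" "u + v = 1"
  then obtain y y' where y: "y \<in> convex hull S" "x \<le> y" and y': "y' \<in> convex hull S" "x' \<le> y'"
    by (auto simp: lower_hull_def)
  have "u *\<^sub>R x + v *\<^sub>R x' \<le> u *\<^sub>R y + v *\<^sub>R y'"
    using y y' uv by (intro add_mono scaleR_left_mono) auto
  moreover have "u *\<^sub>R y + v *\<^sub>R y' \<in> convex hull S"
    using y y' uv by (intro convexD[OF convex_convex_hull]) auto
  ultimately show "u *\<^sub>R x + v *\<^sub>R x' \<in> lower_hull S"
    by (auto simp: lower_hull_def)
qed

lemma lower_hull_subset:
  assumes "S \<subseteq> lower_hull T"
  shows "lower_hull S \<subseteq> lower_hull T"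
proof
  fix x assume "x \<in> lower_hull S"
  then obtain y where "y \<in> convex hull S" "x \<le> y"
    by (auto simp: lower_hull_def)
  moreover have "convex hull S \<subseteq> lower_hull T"
    using assms convex_lower_hull by (rule hull_minimal)
  ultimately show "x \<in> lower_hull T"
    using lower_hull_downward by blast
qed

lemma lower_hull_singleton: "lower_hull {a} = {x. x \<le> a}"
  by (simp add: lower_hull_def)

lemma bilinear_lower_hull:
  fixes f :: "'a::ordered_real_vector \<Rightarrow> 'b::ordered_real_vector \<Rightarrow> 'c::ordered_real_vector"
  assumes linear_left: "\<And>y. linear (\<lambda>x. f x y)" and linear_right: "\<And>x. linear (f x)"
    and mono: "\<And>x x' y y'. 0 \<le> x \<Longrightarrow> x \<le> x' \<Longrightarrow> 0 \<le> y \<Longrightarrow> y \<le> y' \<Longrightarrow> f x y \<le> f x' y'"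
    and generators: "\<And>x y. x \<in> A \<Longrightarrow> y \<in> B \<Longrightarrow> f x y \<in> lower_hull C"
    and x: "x \<in> lower_hull A" "0 \<le> x" and y: "y \<in> lower_hull B" "0 \<le> y"
  shows "f x y \<in> lower_hull C"
proof -
  have image: "g ` (convex hull S) \<subseteq> lower_hull C" if "linear g" "g ` S \<subseteq> lower_hull C" for g S
    unfolding convex_hull_linear_image[OF that(1)]
    by (rule hull_minimal[where S = convex, OF that(2) convex_lower_hull])
  have "f x' y' \<in> lower_hull C" if "x' \<in> convex hull A" "y' \<in> convex hull B" for x' y'
  proof -
    have "f a y' \<in> lower_hull C" if "a \<in> A" for a
      using image[OF linear_right, of a B] generators[OF that] \<open>y' \<in> convex hull B\<close> by blast
    then show ?thesis
      using image[OF linear_left, of y' A] \<open>x' \<in> convex hull A\<close> by blast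
  qed
  moreover obtain x' y' where "x' \<in> convex hull A" "x \<le> x'" "y' \<in> convex hull B" "y \<le> y'"
    using x y by (auto simp: lower_hull_def)
  ultimately show ?thesis
    using mono x y by (meson lower_hull_downward)
qed

lemma linear_total_weight: "linear (total_weight p :: real \<times> real \<times> real \<Rightarrow> real)"
proof (rule linearI)
  fix x y :: "real \<times> real \<times> real" and c :: real
  show "total_weight p (x + y) = total_weight p x + total_weight p y"
    by (cases p; cases x; cases y) (simp add: Let_def algebra_simps)
  show "total_weight p (c *\<^sub>R x) = c *\<^sub>R total_weight p x"
    by (cases p; cases x) (simp add: Let_def algebra_simps)
qed

lemma linear_glue_weights_left: "linear (\<lambda>x :: real \<times> real \<times> real. glue_weights p q x y)"
proof (rule linearI)
  fix x x' :: "real \<times> real \<times> real" and c :: real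
  show "glue_weights p q (x + x') y = glue_weights p q x y + glue_weights p q x' y"
    by (cases p; cases x; cases x'; cases y) (simp add: Let_def algebra_simps)
  show "glue_weights p q (c *\<^sub>R x) y = c *\<^sub>R glue_weights p q x y"
    by (cases p; cases x; cases y) (simp add: Let_def algebra_simps)
qed

lemma linear_glue_weights_right: "linear (glue_weights p q (x :: real \<times> real \<times> real))"
proof (rule linearI)
  fix y y' :: "real \<times> real \<times> real" and c :: real
  show "glue_weights p q x (y + y') = glue_weights p q x y + glue_weights p q x y'"
    by (cases p; cases q; cases x; cases y; cases y') (simp add: Let_def algebra_simps)
  show "glue_weights p q x (c *\<^sub>R y) = c *\<^sub>R glue_weights p q x y"
    by (cases p; cases q; cases x; cases y) (simp add: Let_def algebra_simps)
qed

lemma total_weight_mono: "x \<le> x' \<Longrightarrow> total_weight p x \<le> total_weight p (x' :: real \<times> real \<times> real)"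
  by (cases p; cases x; cases x') (auto simp: Let_def intro!: add_mono mult_left_mono)

lemma total_weight_nonneg: "0 \<le> x \<Longrightarrow> 0 \<le> total_weight p (x :: real \<times> real \<times> real)"
  using total_weight_mono[of 0 x p] by (cases p) (simp add: zero_prod_def Let_def)

lemma glue_weights_mono:
  fixes x x' y y' :: "real \<times> real \<times> real"
  assumes "0 \<le> x" "x \<le> x'" "0 \<le> y" "y \<le> y'"
  shows "glue_weights p q x y \<le> glue_weights p q x' y'"
proof -
  obtain x0 x1 x2 x0' x1' x2' y0 y1 y2 y0' y1' y2' where
    xy: "x = (x0, x1, x2)" "x' = (x0', x1', x2')" "y = (y0, y1, y2)" "y' = (y0', y1', y2')"
    by (cases x; cases x'; cases y; cases y') auto
  have le: "0 \<le> x0" "0 \<le> x1" "0 \<le> x2" "0 \<le> y0" "0 \<le> y1" "0 \<le> y2"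
    "x0 \<le> x0'" "x1 \<le> x1'" "x2 \<le> x2'" "y0 \<le> y0'" "y1 \<le> y1'" "y2 \<le> y2'"
    using assms by (simp_all add: xy zero_prod_def)
  have "total_weight q y \<le> total_weight q y'" "0 \<le> total_weight q y"
    using assms by (simp_all add: total_weight_mono total_weight_nonneg)
  with le show ?thesis
    by (cases p) (auto simp: xy Let_def intro!: mult_mono add_mono mult_right_mono)
qed

section \<open>The certificate\<close>

type_synonym point = "int \<times> int \<times> int"

definition cert_scale :: int where
  "cert_scale = 100000"

fun of_int_point :: "point \<Rightarrow> real \<times> real \<times> real" where
  "of_int_point (a, b, c) = (of_int a, of_int b, of_int c)"

definition cert_point :: "point \<Rightarrow> real \<times> real \<times> real" where
  "cert_point u = (1 / of_int cert_scale) *\<^sub>R of_int_point u"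

fun scale_point :: "int \<Rightarrow> point \<Rightarrow> point" where
  "scale_point c (a, b, d) = (c * a, c * b, c * d)"

definition combination_ok :: "point list \<Rightarrow> point \<Rightarrow> (int \<times> point) list \<Rightarrow> bool" where
  "combination_ok P z ws \<longleftrightarrow> (\<forall>(a, u) \<in> set ws. 0 \<le> a \<and> u \<in> set P) \<and> 0 < sum_list (map fst ws) \<and>
     scale_point (sum_list (map fst ws)) z
       \<le> scale_point cert_scale (sum_list (map (\<lambda>(a, u). scale_point a u) ws))"

text \<open>
  For each bound k on the root degree and each shape, points (scaled by \<open>cert_scale\<close>) whose lower
  hull contains the weights of every rooted subcubic tree of that kind.  \<open>cert_witnesses\<close> gives,
  for the products of certificate points that no single point dominates, integer weights of a
  dominating combination.  The data come from an external search and are trusted only through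
  \<open>step_ok\<close> and \<open>final_ok\<close>.
\<close>

definition cert_table :: "((nat \<times> shape) \<times> point list) list" where
  "cert_table = [
    ((0, (Some 1, None)),
     [(100000, 68213, 0)]),
    ((1, (Some 1, Some 1)),
     [(139593, 31741, 31741), (129910, 44308, 14770), (108258, 14770, 44308), (130974, 41235, 20618), (120897, 20618, 41234)]),
    ((1, (Some 1, Some 0)),
     [(139593, 31741, 46531), (129909, 29539, 64954), (130972, 20618, 90671), (100749, 27490, 90671), (58900, 13393, 176683)]),
    ((1, (Some 1, None)),
     [(100000, 68213, 0)]),
    ((1, (Some 0, Some 1)),
     [(68213, 68213, 46531), (63482, 95221, 21652), (44309, 132922, 10076)]),
    ((1, (Some 0, Some 0)),
     [(46531, 46531, 46531), (21652, 64954, 21652), (30225, 60448, 30224), (21652, 43303, 64954), (14065, 56256, 42191), (10076, 30225, 90671)]),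
    ((2, (Some 1, Some 1)),
     [(139593, 31741, 31741), (129910, 44308, 14770), (194863, 14770, 29539), (181346, 20618, 27490), (108258, 14770, 44308), (130974, 41235, 20618), (168767, 28781, 19188), (120897, 20618, 41234)]),
    ((2, (Some 1, Some 0)),
     [(139593, 31741, 46531), (194863, 14770, 43303), (129909, 29539, 64954), (130972, 20618, 90671), (182828, 9594, 56255), (100749, 27490, 90671), (58900, 13393, 176683)]),
    ((2, (Some 1, None)),
     [(100000, 68213, 0)]),
    ((2, (Some 0, Some 1)),
     [(68213, 68213, 46531), (95221, 31741, 21652), (88616, 44308, 30225), (63482, 95221, 21652), (44309, 132922, 10076), (82470, 61851, 14065)]),
    ((2, (Some 0, Some 0)),
     [(46531, 46531, 46531), (64955, 21652, 43303), (21652, 64954, 21652), (60449, 30225, 40300), (21652, 43303, 64954), (30225, 60448, 30224), (10076, 30225, 90671), (14065, 56256, 42191)]),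
    ((2, (Some (-1), Some 0)),
     [(46531, 68213, 93062), (43303, 95221, 86606), (40300, 132922, 60449), (30225, 132922, 100747), (19633, 259016, 39267)]),
    ((2, (Some (-1), Some (-1))),
     [(21652, 31741, 63481), (4689, 61850, 41235), (4689, 41235, 75595), (6545, 57560, 47967), (3046, 53568, 58032), (9136, 53567, 53567), (2182, 28781, 95932), (1979, 46395, 69590)])]"

definition cert_witnesses ::
    "((shape \<times> shape \<times> point \<times> point) \<times> (int \<times> point) list) list" where
  "cert_witnesses = [
    (((Some 1, None), (Some 1, Some 1), (100000, 68213, 0), (129910, 44308, 14770)),
     [(12335043230242, (68213, 68213, 46531)), (15572406339557, (63482, 95221, 21652)), (3358478980201, (44309, 132922, 10076))]),
    (((Some 1, None), (Some 1, Some 1), (100000, 68213, 0), (181346, 20618, 27490)),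
     [(2181075900741, (68213, 68213, 46531)), (3903100311952, (63482, 95221, 21652)), (25181752337307, (44309, 132922, 10076))]),
    (((Some 1, None), (Some 1, Some 1), (100000, 68213, 0), (130974, 41235, 20618)),
     [(17607427788667, (68213, 68213, 46531)), (42063165336795, (63482, 95221, 21652)), (2861263974538, (44309, 132922, 10076))]),
    (((Some 1, None), (Some 1, Some 1), (100000, 68213, 0), (168767, 28781, 19188)),
     [(15422122969149, (68213, 68213, 46531)), (3055020425918, (63482, 95221, 21652)), (44054713704933, (44309, 132922, 10076))]),
    (((Some 1, Some 1), (Some 1, Some 1), (139593, 31741, 31741), (139593, 31741, 31741)),
     [(55481520, (95221, 31741, 21652)), (41606948537, (88616, 44308, 30225)), (13869943, (63482, 95221, 21652))]),
    (((Some 1, Some 1), (Some 1, Some 1), (129910, 44308, 14770), (129910, 44308, 14770)),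
     [(1181250331458, (68213, 68213, 46531)), (26611802280253, (95221, 31741, 21652)), (8950472025789, (44309, 132922, 10076))]),
    (((Some 1, Some 1), (Some 1, Some 1), (129910, 44308, 14770), (130974, 41235, 20618)),
     [(7091202564767, (95221, 31741, 21652)), (2441241283276, (44309, 132922, 10076)), (945228326957, (82470, 61851, 14065))]),
    (((Some 1, Some 1), (Some 1, Some 1), (130974, 41235, 20618), (139593, 31741, 31741)),
     [(16872867, (95221, 31741, 21652)), (301902133, (82470, 61851, 14065))]),
    (((Some 1, Some 1), (Some 1, Some 1), (130974, 41235, 20618), (129910, 44308, 14770)),
     [(2658429161963, (95221, 31741, 21652)), (637845349675, (44309, 132922, 10076)), (894794358362, (82470, 61851, 14065))]),
    (((Some 1, Some 1), (Some 1, Some 1), (130974, 41235, 20618), (130974, 41235, 20618)),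
     [(3550706476837, (95221, 31741, 21652)), (579186504236, (44309, 132922, 10076)), (4252244758927, (82470, 61851, 14065))]),
    (((Some 1, Some 1), (Some 1, None), (130974, 41235, 20618), (100000, 68213, 0)),
     [(48427420551096235, (68213, 68213, 46531)), (196470821759150539, (95221, 31741, 21652)), (181702953615003800, (88616, 44308, 30225)), (8258691049426, (63482, 95221, 21652))]),
    (((Some 1, Some 1), (Some 0, Some 1), (139593, 31741, 31741), (63482, 95221, 21652)),
     [(4029708077, (64955, 21652, 43303)), (707091923, (10076, 30225, 90671))]),
    (((Some 1, Some 1), (Some 0, Some 1), (129910, 44308, 14770), (63482, 95221, 21652)),
     [(4665011861153, (64955, 21652, 43303)), (1221507606196, (10076, 30225, 90671)), (982878232651, (14065, 56256, 42191))]),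
    (((Some 1, Some 1), (Some 0, Some 1), (129910, 44308, 14770), (44309, 132922, 10076)),
     [(1261574047, (21652, 43303, 64954)), (24275953, (10076, 30225, 90671))]),
    (((Some 1, Some 1), (Some 0, Some 1), (108258, 14770, 44308), (95221, 31741, 21652)),
     [(903766681, (46531, 46531, 46531)), (17383319, (21652, 43303, 64954))]),
    (((Some 1, Some 1), (Some 0, Some 1), (130974, 41235, 20618), (68213, 68213, 46531)),
     [(7919059952518330, (46531, 46531, 46531)), (35879460941071019, (64955, 21652, 43303)), (306352722295548, (21652, 64954, 21652)), (35913028508815103, (60449, 30225, 40300))]),
    (((Some 1, Some 1), (Some 0, Some 1), (130974, 41235, 20618), (63482, 95221, 21652)),
     [(119370990920259, (64955, 21652, 43303)), (31820117560084, (10076, 30225, 90671)), (13674436319657, (14065, 56256, 42191))]),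
    (((Some 1, Some 1), (Some 0, Some 0), (139593, 31741, 31741), (60449, 30225, 40300)),
     [(794488694983137, (139593, 31741, 31741)), (319658681526593, (129910, 44308, 14770)), (4374543569480527, (194863, 14770, 29539)), (921700016509743, (181346, 20618, 27490))]),
    (((Some 1, Some 1), (Some 0, Some 0), (129910, 44308, 14770), (21652, 64954, 21652)),
     [(2948178026581, (139593, 31741, 31741)), (102764124669, (194863, 14770, 29539)), (76949948750, (108258, 14770, 44308))]),
    (((Some 1, Some 1), (Some 0, Some 0), (129910, 44308, 14770), (60449, 30225, 40300)),
     [(20524073223411, (139593, 31741, 31741)), (3315203462039272, (129910, 44308, 14770)), (5715940889913878, (194863, 14770, 29539)), (5243002342373439, (168767, 28781, 19188))]),
    (((Some 1, Some 1), (Some 0, Some 0), (129910, 44308, 14770), (30225, 60448, 30224)),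
     [(341987539840, (139593, 31741, 31741)), (170009131029, (194863, 14770, 29539)), (9318679131, (108258, 14770, 44308))]),
    (((Some 1, Some 1), (Some 0, Some 0), (108258, 14770, 44308), (64955, 21652, 43303)),
     [(736996540466, (139593, 31741, 31741)), (25708386057, (194863, 14770, 29539)), (19268098477, (108258, 14770, 44308))]),
    (((Some 1, Some 1), (Some 0, Some 0), (108258, 14770, 44308), (60449, 30225, 40300)),
     [(44742034252989, (139593, 31741, 31741)), (1120602122338, (129910, 44308, 14770)), (2102820424673, (194863, 14770, 29539))]),
    (((Some 1, Some 1), (Some 0, Some 0), (130974, 41235, 20618), (46531, 46531, 46531)),
     [(3178377941076954, (139593, 31741, 31741)), (1279621821659831, (129910, 44308, 14770)), (17503237568160334, (194863, 14770, 29539)), (3680326519102881, (181346, 20618, 27490))]),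
    (((Some 1, Some 1), (Some 0, Some 0), (130974, 41235, 20618), (64955, 21652, 43303)),
     [(5024387592243, (139593, 31741, 31741)), (1333181748189922, (129910, 44308, 14770)), (2293387874143049, (194863, 14770, 29539)), (2086274297094786, (168767, 28781, 19188))]),
    (((Some 1, Some 1), (Some 0, Some 0), (130974, 41235, 20618), (21652, 64954, 21652)),
     [(44742085695765, (139593, 31741, 31741)), (1120558348498, (129910, 44308, 14770)), (2102812755737, (194863, 14770, 29539))]),
    (((Some 1, Some 1), (Some 0, Some 0), (130974, 41235, 20618), (60449, 30225, 40300)),
     [(25344331924763844, (139593, 31741, 31741)), (209031750674502247, (129910, 44308, 14770)), (413753541882826832, (194863, 14770, 29539)), (2166172887307077, (108258, 14770, 44308))]),
    (((Some 1, Some 1), (Some 0, Some 0), (130974, 41235, 20618), (30225, 60448, 30224)),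
     [(262619911184, (139593, 31741, 31741)), (142997375013, (194863, 14770, 29539)), (5947463803, (108258, 14770, 44308))]),
    (((Some 1, Some 1), (Some 0, Some 0), (120897, 20618, 41234), (64955, 21652, 43303)),
     [(2051829228737, (139593, 31741, 31741)), (1020089524155, (194863, 14770, 29539)), (55973347108, (108258, 14770, 44308))]),
    (((Some 1, Some 1), (Some 0, Some 0), (120897, 20618, 41234), (60449, 30225, 40300)),
     [(6653315088073, (139593, 31741, 31741)), (3622499821881, (194863, 14770, 29539)), (150492090046, (108258, 14770, 44308))]),
    (((Some 1, Some 1), (Some (-1), Some 0), (130974, 41235, 20618), (46531, 68213, 93062)),
     [(6851376841779, (139593, 31741, 31741)), (3992783777072, (129910, 44308, 14770)), (42180629081149, (194863, 14770, 29539))]),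
    (((Some 1, Some 0), (Some 1, Some 1), (139593, 31741, 46531), (139593, 31741, 31741)),
     [(55481520, (95221, 31741, 21652)), (41606948537, (88616, 44308, 30225)), (13869943, (63482, 95221, 21652))]),
    (((Some 1, Some 0), (Some 0, Some 0), (139593, 31741, 46531), (60449, 30225, 40300)),
     [(6850992060207, (139593, 31741, 31741)), (3993111196552, (129910, 44308, 14770)), (42180686443241, (194863, 14770, 29539))]),
    (((Some 1, Some 0), (Some (-1), Some 0), (139593, 31741, 46531), (43303, 95221, 86606)),
     [(233181533500, (139593, 31741, 46531)), (898969988321, (194863, 14770, 43303)), (1233013678179, (182828, 9594, 56255))]),
    (((Some 1, Some 0), (Some (-1), Some 0), (139593, 31741, 46531), (40300, 132922, 60449)),
     [(1307857518504, (139593, 31741, 46531)), (38758054383999, (182828, 9594, 56255)), (6745680897497, (100749, 27490, 90671))]),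
    (((Some 1, Some 0), (Some (-1), Some 0), (139593, 31741, 46531), (19633, 259016, 39267)),
     [(8533330021, (100749, 27490, 90671)), (67869979, (58900, 13393, 176683))]),
    (((Some 1, Some 0), (Some (-1), Some 0), (129909, 29539, 64954), (46531, 68213, 93062)),
     [(2331677855024, (139593, 31741, 46531)), (8990228087677, (194863, 14770, 43303)), (12329746057299, (182828, 9594, 56255))]),
    (((Some 1, Some 0), (Some (-1), Some 0), (129909, 29539, 64954), (43303, 95221, 86606)),
     [(1572125349528, (139593, 31741, 46531)), (11358670446027, (182828, 9594, 56255)), (443945004445, (100749, 27490, 90671))]),
    (((Some 1, Some 0), (Some (-1), Some 0), (129909, 29539, 64954), (30225, 132922, 100747)),
     [(7488935450896, (129909, 29539, 64954)), (735847380951, (130972, 20618, 90671)), (26029341168153, (182828, 9594, 56255))]),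
    (((Some 1, Some 0), (Some (-1), Some 0), (130972, 20618, 90671), (43303, 95221, 86606)),
     [(29957023528336, (129909, 29539, 64954)), (2942081524881, (130972, 20618, 90671)), (104117390946783, (182828, 9594, 56255))]),
    (((Some 1, Some 0), (Some (-1), Some 0), (130972, 20618, 90671), (40300, 132922, 60449)),
     [(64670163091366, (139593, 31741, 46531)), (5136582662223, (182828, 9594, 56255)), (10340509896411, (58900, 13393, 176683))]),
    (((Some 1, Some 0), (Some (-1), Some 0), (100749, 27490, 90671), (46531, 68213, 93062)),
     [(2616440570824, (139593, 31741, 46531)), (77517594743979, (182828, 9594, 56255)), (13489150285197, (100749, 27490, 90671))]),
    (((Some 1, Some 0), (Some (-1), Some 0), (100749, 27490, 90671), (30225, 132922, 100747)),
     [(517370021950376, (139593, 31741, 46531)), (41086985271471, (182828, 9594, 56255)), (82721037978153, (58900, 13393, 176683))]),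
    (((Some 1, Some 0), (Some (-1), Some 0), (58900, 13393, 176683), (46531, 68213, 93062)),
     [(4266743309, (100749, 27490, 90671)), (33856691, (58900, 13393, 176683))]),
    (((Some 1, None), (Some 1, Some 1), (100000, 68213, 0), (129910, 44308, 14770)),
     [(76284211341202, (68213, 68213, 46531)), (15572406339557, (95221, 31741, 21652)), (55117480869241, (44309, 132922, 10076))]),
    (((Some 1, None), (Some 1, Some 1), (100000, 68213, 0), (181346, 20618, 27490)),
     [(33890783873028081, (68213, 68213, 46531)), (8191318050918560, (95221, 31741, 21652)), (4916928811620272, (63482, 95221, 21652)), (300838283929983087, (44309, 132922, 10076))]),
    (((Some 1, None), (Some 1, Some 1), (100000, 68213, 0), (130974, 41235, 20618)),
     [(132199178520067, (68213, 68213, 46531)), (42063165336795, (95221, 31741, 21652)), (119685853243138, (44309, 132922, 10076))]),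
    (((Some 1, None), (Some 1, Some 1), (100000, 68213, 0), (168767, 28781, 19188)),
     [(76086045617589, (68213, 68213, 46531)), (3055020425918, (95221, 31741, 21652)), (214807131056493, (44309, 132922, 10076))]),
    (((Some 0, Some 1), (Some 1, Some 1), (68213, 68213, 46531), (129910, 44308, 14770)),
     [(44636575063165, (46531, 68213, 93062)), (7785809412106, (40300, 132922, 60449)), (12768697574729, (30225, 132922, 100747))]),
    (((Some 0, Some 1), (Some 1, Some 1), (68213, 68213, 46531), (181346, 20618, 27490)),
     [(18578290789998, (46531, 68213, 93062)), (3900958512445, (40300, 132922, 60449)), (107902914797557, (30225, 132922, 100747))]),
    (((Some 0, Some 1), (Some 1, Some 1), (68213, 68213, 46531), (130974, 41235, 20618)),
     [(175621526540324, (46531, 68213, 93062)), (42061534276929, (40300, 132922, 60449)), (43081267382747, (30225, 132922, 100747))]),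
    (((Some 0, Some 1), (Some 1, Some 1), (68213, 68213, 46531), (168767, 28781, 19188)),
     [(15424211117319, (46531, 68213, 93062)), (3051399224465, (43303, 95221, 86606)), (44056168058216, (30225, 132922, 100747))]),
    (((Some 0, Some 1), (Some 1, Some 1), (63482, 95221, 21652), (129910, 44308, 14770)),
     [(18578181743610, (46531, 68213, 93062)), (94906518885629, (40300, 132922, 60449)), (16897463470761, (30225, 132922, 100747))]),
    (((Some 0, Some 1), (Some 1, Some 1), (63482, 95221, 21652), (194863, 14770, 29539)),
     [(118723173488218, (40300, 132922, 60449)), (29302468043055, (30225, 132922, 100747)), (106041159068727, (19633, 259016, 39267))]),
    (((Some 0, Some 1), (Some 1, Some 1), (63482, 95221, 21652), (181346, 20618, 27490)),
     [(70816396943585, (40300, 132922, 60449)), (16163335510198, (30225, 132922, 100747)), (40053667846217, (19633, 259016, 39267))]),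
    (((Some 0, Some 1), (Some 1, Some 1), (63482, 95221, 21652), (130974, 41235, 20618)),
     [(33073565814308, (46531, 68213, 93062)), (208035664244043, (40300, 132922, 60449)), (19655098141649, (30225, 132922, 100747))]),
    (((Some 0, Some 1), (Some 1, Some 1), (63482, 95221, 21652), (168767, 28781, 19188)),
     [(146618475441625, (40300, 132922, 60449)), (51475158604832, (30225, 132922, 100747)), (55973166553543, (19633, 259016, 39267))]),
    (((Some 0, Some 1), (Some 1, Some 1), (44309, 132922, 10076), (139593, 31741, 31741)),
     [(59361750896635, (40300, 132922, 60449)), (14651764777788, (30225, 132922, 100747)), (53019884625577, (19633, 259016, 39267))]),
    (((Some 0, Some 1), (Some 1, Some 1), (44309, 132922, 10076), (129910, 44308, 14770)),
     [(14781011080952, (40300, 132922, 60449)), (28709109255053, (30225, 132922, 100747)), (20026579813995, (19633, 259016, 39267))]),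
    (((Some 0, Some 1), (Some 1, Some 1), (44309, 132922, 10076), (181346, 20618, 27490)),
     [(3702546198699, (40300, 132922, 60449)), (5348016821604, (30225, 132922, 100747)), (54466137129697, (19633, 259016, 39267))]),
    (((Some 0, Some 1), (Some 1, Some 1), (44309, 132922, 10076), (108258, 14770, 44308)),
     [(109064517, (46531, 68213, 93062)), (339235483, (19633, 259016, 39267))]),
    (((Some 0, Some 1), (Some 1, Some 1), (44309, 132922, 10076), (130974, 41235, 20618)),
     [(39926681320331, (40300, 132922, 60449)), (45628732810583, (30225, 132922, 100747)), (41477986169086, (19633, 259016, 39267))]),
    (((Some 0, Some 1), (Some 1, Some 1), (44309, 132922, 10076), (168767, 28781, 19188)),
     [(2895276681831, (46531, 68213, 93062)), (29643352639413, (30225, 132922, 100747)), (91144913428756, (19633, 259016, 39267))]),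
    (((Some 0, Some 1), (Some 1, Some 1), (44309, 132922, 10076), (120897, 20618, 41234)),
     [(194325067, (40300, 132922, 60449)), (322349933, (19633, 259016, 39267))]),
    (((Some 0, Some 1), (Some 1, Some 0), (63482, 95221, 21652), (194863, 14770, 43303)),
     [(58604936086110, (46531, 68213, 93062)), (71054774470877, (40300, 132922, 60449)), (144504047843013, (19633, 259016, 39267))]),
    (((Some 0, Some 1), (Some 1, Some 0), (63482, 95221, 21652), (182828, 9594, 56255)),
     [(94544213, (40300, 132922, 60449)), (117275787, (19633, 259016, 39267))]),
    (((Some 0, Some 1), (Some 1, Some 0), (44309, 132922, 10076), (139593, 31741, 46531)),
     [(7325882388894, (46531, 68213, 93062)), (8881632713015, (40300, 132922, 60449)), (18062954698091, (19633, 259016, 39267))]),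
    (((Some 0, Some 1), (Some 1, Some 0), (44309, 132922, 10076), (129909, 29539, 64954)),
     [(654323021, (40300, 132922, 60449)), (404776979, (19633, 259016, 39267))]),
    (((Some 0, Some 1), (Some 1, Some 0), (44309, 132922, 10076), (130972, 20618, 90671)),
     [(33389917, (40300, 132922, 60449)), (496160083, (19633, 259016, 39267))]),
    (((Some 0, Some 1), (Some 1, Some 0), (44309, 132922, 10076), (100749, 27490, 90671)),
     [(11601136, (40300, 132922, 60449)), (21495739, (19633, 259016, 39267))]),
    (((Some 0, Some 1), (Some 0, Some 0), (68213, 68213, 46531), (60449, 30225, 40300)),
     [(48452769581828628, (68213, 68213, 46531)), (196529489048968072, (95221, 31741, 21652)), (181624097588270545, (88616, 44308, 30225)), (3098397232755, (63482, 95221, 21652))]),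
    (((Some 0, Some 1), (Some 0, Some 0), (63482, 95221, 21652), (46531, 46531, 46531)),
     [(126524724, (95221, 31741, 21652)), (680564724377, (88616, 44308, 30225)), (21650899, (63482, 95221, 21652))]),
    (((Some 0, Some 1), (Some 0, Some 0), (63482, 95221, 21652), (60449, 30225, 40300)),
     [(16872867, (95221, 31741, 21652)), (301902133, (82470, 61851, 14065))]),
    (((Some 0, Some 1), (Some (-1), Some 0), (63482, 95221, 21652), (46531, 68213, 93062)),
     [(126524724, (95221, 31741, 21652)), (680564724377, (88616, 44308, 30225)), (21650899, (63482, 95221, 21652))]),
    (((Some 0, Some 0), (Some 0, Some 1), (46531, 46531, 46531), (95221, 31741, 21652)),
     [(36952717610635, (21652, 31741, 63481)), (39475170331421, (4689, 61850, 41235)), (14694011957944, (2182, 28781, 95932))]),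
    (((Some 0, Some 0), (Some 0, Some 1), (46531, 46531, 46531), (88616, 44308, 30225)),
     [(25306161983073920, (21652, 31741, 63481)), (9741955399270043, (4689, 41235, 75595)), (4728468582184764, (6545, 57560, 47967)), (13218191601571273, (9136, 53567, 53567))]),
    (((Some 0, Some 0), (Some 0, Some 1), (46531, 46531, 46531), (63482, 95221, 21652)),
     [(2208590707, (21652, 31741, 63481)), (1036509293, (2182, 28781, 95932))]),
    (((Some 0, Some 0), (Some 0, Some 1), (46531, 46531, 46531), (44309, 132922, 10076)),
     [(10334017636259, (21652, 31741, 63481)), (18081935781774, (4689, 61850, 41235)), (69943639881967, (2182, 28781, 95932))]),
    (((Some 0, Some 0), (Some 0, Some 1), (46531, 46531, 46531), (82470, 61851, 14065)),
     [(42694488341591, (21652, 31741, 63481)), (22612333093030, (4689, 61850, 41235)), (25815078465379, (2182, 28781, 95932))]),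
    (((Some 0, Some 0), (Some 0, Some 1), (21652, 64954, 21652), (68213, 68213, 46531)),
     [(18477164448912, (21652, 31741, 63481)), (19737221671491, (4689, 61850, 41235)), (7346563829597, (2182, 28781, 95932))]),
    (((Some 0, Some 0), (Some 0, Some 1), (30225, 60448, 30224), (68213, 68213, 46531)),
     [(25310206385973830, (21652, 31741, 63481)), (9742847781401567, (4689, 41235, 75595)), (4746473724352416, (6545, 57560, 47967)), (13195249674372187, (9136, 53567, 53567))]),
    (((Some 0, Some 0), (Some 0, Some 1), (30225, 60448, 30224), (63482, 95221, 21652)),
     [(361576364738686, (21652, 31741, 63481)), (1931308845668833, (4689, 41235, 75595)), (105816923099881, (9136, 53567, 53567)), (493690597417600, (2182, 28781, 95932))]),
    (((Some 0, Some 0), (Some 0, Some 1), (30225, 60448, 30224), (44309, 132922, 10076)),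
     [(1043388514651, (21652, 31741, 63481)), (366130720515, (4689, 61850, 41235)), (23180379089834, (2182, 28781, 95932))]),
    (((Some 0, Some 0), (Some 0, Some 1), (30225, 60448, 30224), (82470, 61851, 14065)),
     [(1191102984084811, (21652, 31741, 63481)), (11667688824209435, (4689, 41235, 75595)), (2870526397764796, (6545, 57560, 47967)), (26900899268240958, (3046, 53568, 58032))]),
    (((Some 0, Some 0), (Some 0, Some 1), (21652, 43303, 64954), (68213, 68213, 46531)),
     [(25386957, (21652, 31741, 63481)), (11913043, (2182, 28781, 95932))]),
    (((Some 0, Some 0), (Some 0, Some 1), (21652, 43303, 64954), (88616, 44308, 30225)),
     [(361566050562088, (21652, 31741, 63481)), (1930939078544119, (4689, 41235, 75595)), (105979106476358, (9136, 53567, 53567)), (493908495342435, (2182, 28781, 95932))]),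
    (((Some 0, Some 0), (Some 0, Some 1), (21652, 43303, 64954), (63482, 95221, 21652)),
     [(1346435209, (21652, 31741, 63481)), (1898664791, (2182, 28781, 95932))]),
    (((Some 0, Some 0), (Some 0, Some 1), (21652, 43303, 64954), (82470, 61851, 14065)),
     [(13614728153153, (21652, 31741, 63481)), (17879731592590, (4689, 61850, 41235)), (59627440154257, (2182, 28781, 95932))]),
    (((Some 0, Some 0), (Some 0, Some 1), (14065, 56256, 42191), (68213, 68213, 46531)),
     [(42696804627425, (21652, 31741, 63481)), (22611545948688, (4689, 61850, 41235)), (25813549323887, (2182, 28781, 95932))]),
    (((Some 0, Some 0), (Some 0, Some 1), (14065, 56256, 42191), (88616, 44308, 30225)),
     [(1186077176891811, (21652, 31741, 63481)), (11681864810666611, (4689, 41235, 75595)), (2890594709534964, (6545, 57560, 47967)), (26871680777206614, (3046, 53568, 58032))]),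
    (((Some 0, Some 0), (Some 0, Some 1), (14065, 56256, 42191), (63482, 95221, 21652)),
     [(6805614620377, (21652, 31741, 63481)), (8940642131136, (4689, 61850, 41235)), (29814693198487, (2182, 28781, 95932))]),
    (((Some 0, Some 0), (Some 0, Some 1), (10076, 30225, 90671), (68213, 68213, 46531)),
     [(2583468801517, (21652, 31741, 63481)), (4520760482721, (4689, 61850, 41235)), (17485669040762, (2182, 28781, 95932))]),
    (((Some 0, Some 0), (Some 0, Some 1), (10076, 30225, 90671), (88616, 44308, 30225)),
     [(1043417573288, (21652, 31741, 63481)), (365905043745, (4689, 61850, 41235)), (23180575707967, (2182, 28781, 95932))]),
    (((Some 0, Some 0), (Some 0, Some 0), (46531, 46531, 46531), (60449, 30225, 40300)),
     [(23752115328922517, (46531, 46531, 46531)), (107639714938076913, (64955, 21652, 43303)), (921029727035194, (21652, 64954, 21652)), (107740846380065376, (60449, 30225, 40300))]),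
    (((Some 0, Some 0), (Some 0, Some 0), (21652, 64954, 21652), (21652, 64954, 21652)),
     [(90378439, (46531, 46531, 46531)), (1736561, (21652, 43303, 64954))]),
    (((Some 0, Some 0), (Some 0, Some 0), (21652, 43303, 64954), (46531, 46531, 46531)),
     [(4029793533, (64955, 21652, 43303)), (707006467, (10076, 30225, 90671))]),
    (((Some 0, Some 0), (Some 0, Some 0), (21652, 43303, 64954), (64955, 21652, 43303)),
     [(1696377346309, (64955, 21652, 43303)), (444185614424, (10076, 30225, 90671)), (357399839267, (14065, 56256, 42191))]),
    (((Some 0, Some 0), (Some 0, Some 0), (21652, 43303, 64954), (60449, 30225, 40300)),
     [(119375646872289, (64955, 21652, 43303)), (31817552404948, (10076, 30225, 90671)), (13672345522763, (14065, 56256, 42191))]),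
    (((Some 0, Some 0), (Some 0, Some 0), (10076, 30225, 90671), (64955, 21652, 43303)),
     [(504626699, (21652, 43303, 64954)), (9713301, (10076, 30225, 90671))])]"

definition pair_ok :: "point list \<Rightarrow> shape \<Rightarrow> shape \<Rightarrow> point \<Rightarrow> point \<Rightarrow> bool" where
  "pair_ok P p q v w \<longleftrightarrow> (let z = glue_weights p q v w in
     (\<exists>u \<in> set P. z \<le> scale_point cert_scale u) \<or>
     (case map_of cert_witnesses (p, q, v, w) of None \<Rightarrow> False | Some ws \<Rightarrow> combination_ok P z ws))"

definition cert_entries :: "nat \<Rightarrow> (shape \<times> point list) list" where
  "cert_entries k = [(p, P). ((k', p), P) \<leftarrow> cert_table, k' = k]"

definition step_ok :: "nat \<Rightarrow> bool" where
  "step_ok k \<longleftrightarrow> (\<forall>(p, P1) \<in> set (cert_entries (k - 1)). \<forall>(q, P2) \<in> set (cert_entries 2).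
     case map_of cert_table (k, glue_shape p q) of
       None \<Rightarrow> False
     | Some P \<Rightarrow> (\<forall>v \<in> set P1. \<forall>w \<in> set P2. pair_ok P p q v w))"

definition upper_corner :: "point list \<Rightarrow> point" where
  "upper_corner P = foldr sup P (hd P)"

text \<open>
  537289 / 250000 = 1.466^2.  By monotonicity the second factor may be replaced by the componentwise
  maximum of its points.
\<close>

definition final_ok :: bool where
  "final_ok \<longleftrightarrow> (\<forall>(p, P1) \<in> set (cert_entries 2). \<forall>(q, P2) \<in> set (cert_entries 2). \<forall>v \<in> set P1.
     250000 * total_weight (glue_shape p q) (glue_weights p q v (upper_corner P2))
       \<le> 537289 * cert_scale\<^sup>2)"

definition certified :: "nat \<Rightarrow> profiles \<Rightarrow> bool" where
  "certified k S \<longleftrightarrow> proper S \<and>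
     (\<exists>P. ((k, shape S), P) \<in> set cert_table \<and> weights S \<in> lower_hull (cert_point ` set P))"

lemma step_ok_1: "step_ok 1"
  by code_simp

lemma step_ok_2: "step_ok 2"
  by code_simp

lemma final_ok: final_ok
  by code_simp

lemma of_int_point_add: "of_int_point (u + v) = of_int_point u + of_int_point v"
  by (cases u; cases v) simp

lemma of_int_point_sum: "of_int_point (sum f A) = (\<Sum>i \<in> A. of_int_point (f i))"
  by (induction A rule: infinite_finite_induct) (simp_all add: of_int_point_add zero_prod_def)

lemma of_int_point_scale: "of_int_point (scale_point c u) = of_int c *\<^sub>R of_int_point u"
  by (cases u) simp

lemma of_int_point_le_iff: "of_int_point u \<le> of_int_point v \<longleftrightarrow> u \<le> v"
  by (cases u; cases v) simp

lemma of_int_point_glue_weights: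
  "of_int_point (glue_weights p q v w) = glue_weights p q (of_int_point v) (of_int_point w)"
  by (cases p; cases q; cases v; cases w) (simp add: Let_def)

lemma of_int_total_weight: "of_int (total_weight r z) = total_weight r (of_int_point z)"
  by (cases r; cases z) (simp add: Let_def)

lemma cert_point_mono: "u \<le> v \<Longrightarrow> cert_point u \<le> cert_point v"
  unfolding cert_point_def
  by (rule scaleR_left_mono) (simp_all add: of_int_point_le_iff cert_scale_def)

lemma glue_weights_cert_point:
  "glue_weights p q (cert_point v) (cert_point w)
     = (1 / of_int cert_scale ^ 2) *\<^sub>R of_int_point (glue_weights p q v w)"
  unfolding cert_point_def of_int_point_glue_weights power2_eq_square
  by (simp add: linear_scale[OF linear_glue_weights_left]
      linear_scale[OF linear_glue_weights_right])

lemma sum_list_map_nth: "sum_list (map f xs) = (\<Sum>i<length xs. f (xs ! i))"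
  by (simp add: sum_list_sum_nth atLeast0LessThan)

lemma combination_ok_sound:
  assumes "combination_ok P z ws"
  shows "(1 / of_int cert_scale ^ 2) *\<^sub>R of_int_point z \<in> lower_hull (cert_point ` set P)"
proof -
  define n a u where "n = length ws" and "a i = fst (ws ! i)" and "u i = snd (ws ! i)" for i
  define q D where "q = real_of_int (\<Sum>i<n. a i)" and "D = real_of_int cert_scale"
  have ws: "\<And>i. i < n \<Longrightarrow> 0 \<le> a i \<and> u i \<in> set P"
    using assms nth_mem unfolding combination_ok_def n_def a_def u_def by fastforce
  have "0 < (\<Sum>i<n. a i)"
    using assms by (simp add: combination_ok_def sum_list_map_nth a_def n_def)
  then have "0 < q"
    unfolding q_def of_int_0_less_iff .
  have D: "0 < D"
    by (simp add: D_def cert_scale_def)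
  have "scale_point (\<Sum>i<n. a i) z \<le> scale_point cert_scale (\<Sum>i<n. scale_point (a i) (u i))"
    using assms by (simp add: combination_ok_def sum_list_map_nth a_def u_def n_def case_prod_beta)
  then have "q *\<^sub>R of_int_point z \<le> D *\<^sub>R (\<Sum>i<n. a i *\<^sub>R of_int_point (u i))"
    unfolding of_int_point_le_iff[symmetric]
    by (simp add: of_int_point_scale q_def D_def of_int_point_sum)
  then have "(1 / (q * D\<^sup>2)) *\<^sub>R (q *\<^sub>R of_int_point z)
      \<le> (1 / (q * D\<^sup>2)) *\<^sub>R (D *\<^sub>R (\<Sum>i<n. a i *\<^sub>R of_int_point (u i)))"
    using \<open>0 < q\<close> D by (intro scaleR_left_mono) auto
  also have "\<dots> = (\<Sum>i<n. (a i / q) *\<^sub>R cert_point (u i))"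
    using D by (simp add: scaleR_sum_right cert_point_def D_def power2_eq_square)
  finally have le:
    "(1 / of_int cert_scale ^ 2) *\<^sub>R of_int_point z \<le> (\<Sum>i<n. (a i / q) *\<^sub>R cert_point (u i))"
    using \<open>0 < q\<close> D by (simp add: D_def power2_eq_square)
  have "(\<Sum>i<n. (a i / q) *\<^sub>R cert_point (u i)) \<in> convex hull (cert_point ` set P)"
  proof (rule convex_sum)
    show "(\<Sum>i<n. a i / q) = 1"
      using \<open>0 < q\<close> by (simp add: q_def flip: sum_divide_distrib)
  qed (use ws \<open>0 < q\<close> in \<open>auto intro: hull_inc\<close>)
  with le show ?thesis
    by (auto simp: lower_hull_def)
qed

lemma scale_point_one: "scale_point 1 u = u"
  by (cases u) simp

lemma pair_ok_sound:
  assumes "pair_ok P p q v w"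
  shows "glue_weights p q (cert_point v) (cert_point w) \<in> lower_hull (cert_point ` set P)"
proof -
  define z where "z = glue_weights p q v w"
  have "\<exists>ws. combination_ok P z ws"
  proof (cases "\<exists>u \<in> set P. z \<le> scale_point cert_scale u")
    case True
    then obtain u where "u \<in> set P" "z \<le> scale_point cert_scale u"
      by blast
    then have "combination_ok P z [(1, u)]"
      by (simp add: combination_ok_def scale_point_one)
    then show ?thesis ..
  next
    case False
    with assms show ?thesis
      by (auto simp: pair_ok_def z_def Let_def split: option.splits)
  qed
  then obtain ws where "combination_ok P z ws" ..
  then show ?thesis
    unfolding glue_weights_cert_point z_def[symmetric] by (rule combination_ok_sound)
qed

lemma weights_nonneg: "0 \<le> weights S"
  by (cases S) (simp add: weight_nonneg zero_prod_def)

lemma mem_cert_entries_iff: "(p, P) \<in> set (cert_entries k) \<longleftrightarrow> ((k, p), P) \<in> set cert_table"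
proof -
  have "(p, P) \<in> set [(p, P). ((k', p), P) \<leftarrow> xs, k' = k] \<longleftrightarrow> ((k, p), P) \<in> set xs"
    for xs :: "((nat \<times> shape) \<times> point list) list"
    by (induction xs) auto
  then show ?thesis
    by (simp add: cert_entries_def)
qed

lemma certified_glue:
  assumes step: "step_ok k" and S: "certified (k - 1) S" and T: "certified 2 T"
  shows "certified k (glue S T)"
proof -
  obtain P1 P2
    where P1: "(shape S, P1) \<in> set (cert_entries (k - 1))" "weights S \<in> lower_hull (cert_point ` set P1)"
    and P2: "(shape T, P2) \<in> set (cert_entries 2)" "weights T \<in> lower_hull (cert_point ` set P2)"
    and proper: "proper S" "proper T"
    using S T by (auto simp: certified_def mem_cert_entries_iff)
  obtain P where P: "map_of cert_table (k, glue_shape (shape S) (shape T)) = Some P"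
    and pairs: "\<And>v w. v \<in> set P1 \<Longrightarrow> w \<in> set P2 \<Longrightarrow> pair_ok P (shape S) (shape T) v w"
    using step P1(1) P2(1) unfolding step_ok_def by (fastforce split: option.splits)
  have "glue_weights (shape S) (shape T) x y \<in> lower_hull (cert_point ` set P)"
    if "x \<in> cert_point ` set P1" "y \<in> cert_point ` set P2" for x y
    using that pair_ok_sound[OF pairs] by blast
  from bilinear_lower_hull[where f = "glue_weights (shape S) (shape T)",
      OF linear_glue_weights_left linear_glue_weights_right glue_weights_mono this
      P1(2) weights_nonneg P2(2) weights_nonneg]
  have "glue_weights (shape S) (shape T) (weights S) (weights T)
      \<in> lower_hull (cert_point ` set P)" .
  then show ?thesis
    using map_of_SomeD[OF P] proper_glue[OF proper] shape_weights_glue[OF proper]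
    by (auto simp: certified_def)
qed

lemma foldr_sup_ge: "u \<in> set P \<Longrightarrow> u \<le> foldr sup P (x :: 'a::semilattice_sup)"
proof (induction P)
  case (Cons a P)
  then consider "u = a" | "u \<in> set P"
    by auto
  then show ?case
  proof cases
    case 2
    then have "u \<le> foldr sup P x"
      by (rule Cons.IH)
    then show ?thesis
      by (simp add: le_supI2)
  qed simp
qed simp

lemma lower_hull_upper_corner:
  "lower_hull (cert_point ` set P) \<subseteq> {y. y \<le> cert_point (upper_corner P)}"
proof -
  have "cert_point ` set P \<subseteq> lower_hull {cert_point (upper_corner P)}"
    by (auto simp: lower_hull_singleton upper_corner_def intro!: cert_point_mono foldr_sup_ge)
  from lower_hull_subset[OF this] show ?thesis
    by (simp add: lower_hull_singleton)
qed

lemma final_ok_sound: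
  assumes final: final_ok
    and P1: "(p, P1) \<in> set (cert_entries 2)" and P2: "(q, P2) \<in> set (cert_entries 2)"
    and v: "v \<in> set P1"
  shows "total_weight (glue_shape p q)
      (glue_weights p q (cert_point v) (cert_point (upper_corner P2))) \<le> growth_rate\<^sup>2"
proof -
  define X where "X = total_weight (glue_shape p q) (glue_weights p q v (upper_corner P2))"
  have "250000 * X \<le> 537289 * cert_scale\<^sup>2"
    using bspec[OF bspec[OF final[unfolded final_ok_def] P1, unfolded prod.case] P2] v
    by (simp add: X_def)
  then have "real_of_int (250000 * X) \<le> real_of_int (537289 * cert_scale\<^sup>2)"
    by (simp only: of_int_le_iff)
  then have "250000 * of_int X \<le> 537289 * (of_int cert_scale :: real)\<^sup>2"
    by (simp only: of_int_mult of_int_power of_int_numeral)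
  moreover have "total_weight (glue_shape p q)
      (glue_weights p q (cert_point v) (cert_point (upper_corner P2))) = of_int X / of_int cert_scale ^ 2"
    by (simp add: X_def glue_weights_cert_point linear_scale[OF linear_total_weight]
        of_int_total_weight)
  moreover have "0 < (of_int cert_scale :: real)\<^sup>2"
    by (simp add: cert_scale_def)
  ultimately show ?thesis
    by (simp add: growth_rate_def pos_divide_le_eq power2_eq_square)
qed

lemma certified_total_bound:
  assumes final: final_ok and S: "certified 2 S" and T: "certified 2 T"
  shows "weight (total_profile (glue S T)) \<le> growth_rate\<^sup>2"
proof -
  obtain P1 P2
    where P1: "(shape S, P1) \<in> set (cert_entries 2)" "weights S \<in> lower_hull (cert_point ` set P1)"
    and P2: "(shape T, P2) \<in> set (cert_entries 2)" "weights T \<in> lower_hull (cert_point ` set P2)"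
    and proper: "proper S" "proper T"
    using S T by (auto simp: certified_def mem_cert_entries_iff)
  define p q r where "p = shape S" and "q = shape T" and "r = glue_shape p q"
  define f :: "real \<times> real \<times> real \<Rightarrow> real \<times> real \<times> real \<Rightarrow> real"
    where "f x y = total_weight r (glue_weights p q x y)" for x y
  have vertex: "f (cert_point v) (cert_point (upper_corner P2)) \<le> growth_rate\<^sup>2"
    if "v \<in> set P1" for v
    using final_ok_sound[OF final P1(1) P2(1) that] by (simp add: f_def p_def q_def r_def)
  have "f (weights S) (weights T) \<in> lower_hull {growth_rate\<^sup>2}"
  proof (rule bilinear_lower_hull[where f = f and A = "cert_point ` set P1"
        and B = "{cert_point (upper_corner P2)}"])
    show "linear (\<lambda>x. f x y)" for y
      using linear_compose[OF linear_glue_weights_left linear_total_weight]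
      by (simp add: f_def o_def)
    show "linear (f x)" for x
      using linear_compose[OF linear_glue_weights_right linear_total_weight]
      by (simp add: f_def[abs_def] o_def)
    show "f x y \<le> f x' y'" if "0 \<le> x" "x \<le> x'" "0 \<le> y" "y \<le> y'" for x x' y y'
      unfolding f_def using that by (intro total_weight_mono glue_weights_mono)
    show "f x y \<in> lower_hull {growth_rate\<^sup>2}"
      if "x \<in> cert_point ` set P1" "y \<in> {cert_point (upper_corner P2)}" for x y
      using that vertex by (auto simp: lower_hull_singleton)
    show "weights T \<in> lower_hull {cert_point (upper_corner P2)}"
      using lower_hull_upper_corner P2(2) by (auto simp: lower_hull_singleton)
  qed (use P1(2) weights_nonneg in auto)
  then show ?thesis
    using weight_total_profile[OF proper_glue[OF proper]] shape_weights_glue[OF proper]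
    by (simp add: lower_hull_singleton f_def p_def q_def r_def)
qed

lemma certified_leaf:
  assumes "k \<le> 2"
  shows "certified k leaf_profiles"
proof -
  have "k = 0 \<or> k = 1 \<or> k = 2"
    using assms by auto
  then have "((k, (Some 1, None)), [(100000, 68213, 0)]) \<in> set cert_table"
    by (auto simp: cert_table_def)
  moreover have "weights leaf_profiles \<le> cert_point (100000, 68213, 0)"
    by (simp add: leaf_profiles_def weight_def growth_rate_def cert_point_def cert_scale_def)
  then have "weights leaf_profiles \<in> lower_hull (cert_point ` set [(100000, 68213, 0)])"
    by (auto simp: lower_hull_def intro: hull_inc)
  ultimately show ?thesis
    by (auto simp: certified_def leaf_profiles_def level_def)
qed

section \<open>Subcubic trees\<close>

lemma certified_root_profiles:
  assumes "subcubic_tree V E" "r \<in> V" "degree E r \<le> k" "k \<le> 2"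
  shows "certified k (root_profiles V E r)"
  using assms
proof (induction "card V" arbitrary: V E r k rule: less_induct)
  case less
  then have tree: "simple_graph V E" "connected_graph V E" and subcubic: "\<forall>v \<in> V. degree E v \<le> 3"
    by (auto simp: subcubic_tree_def is_tree_def)
  show ?case
  proof (cases "degree E r = 0")
    case True
    then show ?thesis
      using root_profiles_isolated_vertex[OF tree less.prems(2)] certified_leaf less.prems(4)
      by simp
  next
    case False
    then have "neighbours E r \<noteq> {}"
      by (auto simp: degree_def)
    then obtain b where rb: "E r b"
      by (auto simp: neighbours_def)
    obtain V1 V2 where cut: "edge_cut V E r b V1 V2"
      and sub: "subcubic_tree V1 (restrict_graph V1 E)" "subcubic_tree V2 (restrict_graph V2 E)"
      and deg: "degree E r = Suc (degree (restrict_graph V1 E) r)"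
        "degree E b = Suc (degree (restrict_graph V2 E) b)"
      using less.prems(1) rb by (rule subcubic_tree_cut)
    interpret edge_cut V E r b V1 V2
      by (rule cut)
    note card = card_left_less edge_cut.card_left_less[OF swap]
    have "certified (k - 1) (root_profiles V1 E1 r)"
      using less.hyps[OF card(1) sub(1) r_in] deg(1) less.prems(3,4) by simp
    moreover have "degree E2 b \<le> 2"
      using deg(2) subcubic edge_in[OF edge] by auto
    then have "certified 2 (root_profiles V2 E2 b)"
      using less.hyps[OF card(2) sub(2) b_in] by simp
    moreover have "k = 1 \<or> k = 2"
      using False less.prems(3,4) by auto
    then have "step_ok k"
      using step_ok_1 step_ok_2 by auto
    ultimately show ?thesis
      by (simp add: root_profiles_glue certified_glue)
  qed
qed

lemma weight_diss_sets_le: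
  assumes "subcubic_tree V E"
  shows "weight (profile (diss_sets V E)) \<le> growth_rate\<^sup>2"
proof -
  have tree: "simple_graph V E" "connected_graph V E" and subcubic: "\<forall>v \<in> V. degree E v \<le> 3"
    using assms by (auto simp: subcubic_tree_def is_tree_def)
  obtain r where r: "r \<in> V"
    using tree(2) by (auto simp: connected_graph_def)
  have "weight (total_profile (root_profiles V E r)) \<le> growth_rate\<^sup>2"
  proof (cases "degree E r = 0")
    case True
    then show ?thesis
      by (simp add: root_profiles_isolated_vertex[OF tree r] leaf_profiles_def profile_plus_def
          weight_def growth_rate_def power2_eq_square)
  next
    case False
    then have "neighbours E r \<noteq> {}"
      by (auto simp: degree_def)
    then obtain b where rb: "E r b"
      by (auto simp: neighbours_def)
    obtain V1 V2 where cut: "edge_cut V E r b V1 V2"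
      and sub: "subcubic_tree V1 (restrict_graph V1 E)" "subcubic_tree V2 (restrict_graph V2 E)"
      and deg: "degree E r = Suc (degree (restrict_graph V1 E) r)"
        "degree E b = Suc (degree (restrict_graph V2 E) b)"
      using assms rb by (rule subcubic_tree_cut)
    interpret edge_cut V E r b V1 V2
      by (rule cut)
    have "degree E1 r \<le> 2" "degree E2 b \<le> 2"
      using deg subcubic edge_in[OF edge] by auto
    then have "certified 2 (root_profiles V1 E1 r)" "certified 2 (root_profiles V2 E2 b)"
      using certified_root_profiles[OF sub(1) r_in] certified_root_profiles[OF sub(2) b_in]
      by simp_all
    then show ?thesis
      by (simp add: root_profiles_glue certified_total_bound final_ok)
  qed
  moreover have "finite V"
    using tree(1) by (simp add: simple_graph_def)
  ultimately show ?thesis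
    by (simp add: profile_diss_sets_eq_total[of V E r])
qed

lemma profile_diss_sets:
  "profile (diss_sets V E) = (dissociation_number V E, num_max_dissociation_sets V E)"
proof -
  have "{} \<in> diss_sets V E"
    by (simp add: diss_sets_def dissociation_set_def)
  then show ?thesis
    by (auto simp: profile_def diss_sets_def dissociation_number_def num_max_dissociation_sets_def
        max_dissociation_set_def)
qed

theorem corollary3p5:
  fixes V :: "'a set" and E :: "'a \<Rightarrow> 'a \<Rightarrow> bool"
  assumes "subcubic_tree V E"
  shows "real (num_max_dissociation_sets V E)
           \<le> (1.466::real) ^ (dissociation_number V E + 2)"
proof -
  have "real (num_max_dissociation_sets V E) / growth_rate ^ dissociation_number V E
      \<le> growth_rate\<^sup>2"
    using weight_diss_sets_le[OF assms] by (simp add: profile_diss_sets weight_def)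
  then have "real (num_max_dissociation_sets V E)
      \<le> growth_rate\<^sup>2 * growth_rate ^ dissociation_number V E"
    using growth_rate_pos by (simp add: pos_divide_le_eq)
  also have "\<dots> = (1.466::real) ^ (dissociation_number V E + 2)"
    by (simp add: growth_rate_def power_add power2_eq_square)
  finally show ?thesis .
qed

end
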